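(* Let $\alpha\in(0,1)$ and $n\ge 1$. Consider the cooling process $(w_t)_{t\ge0}$ on $\mathcal{W}_{2n}$. If $w_t\in\mathcal{W}_{2n}$ satisfies $E(w_t)>0$, then $$\mathbb{E}\big(\phi_\alpha(w_{t+1})-\phi_\alpha(w_t)\,\big|\,w_t\big)\le -\frac{\alpha(1-\alpha)}{2}\,n^{\alpha-2}.$$
   Context: A configuration of length $m$ is a word $w=w_1\cdots w_m$ over $\{1,2\}$ with $|w|_1=|w|_2$; $\mathcal{W}_m$ is the set of such words. A flip at position $i$ exchanges $w_i$ and $w_{i+1}$ when $w_i\ne w_{i+1}$. A mismatch at position $i$ means $w_i=w_{i+1}$; $E(w)$ is the number of mismatches. The cooling process is the Markov chain with $w_{t+1}=w_t$ if $E(w_t)=0$, and otherwise $w_{t+1}$ is obtained by performing a flip chosen uniformly at random among the flips on $w_t$ that do not increase $E$. Dyck factors: write $w=p\cdot v\cdot s$ with $v=v_1\cdots v_k$ a nonempty factor (occurring at a given position). $v$ is a positive Dyck factor of height $|p|_1-|p|_2$ if $|v|_1=|v|_2$, $|v_1\cdots v_i|_1\ge|v_1\cdots v_i|_2$ for all $1\le i\le k$, and $|p|_1-|p|_2\ge0$. A negative Dyck factor is defined by exchanging the letters $1$ and $2$ in these three conditions. A Dyck factor is maximal if no Dyck factor with the same height contains it. For $\alpha\in(0,1)$, $\phi_\alpha(w)=\sum_{v\in\mathrm{DF}(w)}(1+|v|_1)^\alpha$, where $\mathrm{DF}(w)$ is the set of (occurrences of) maximal Dyck factors of $w$. *)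

theory Defs
  imports "HOL-Probability.Probability"
begin

text \<open>Words over the alphabet {1,2} are lists of naturals; positions are 0-indexed.\<close>

definition configs :: "nat \<Rightarrow> nat list set" where
  "configs m = {w. length w = m \<and> set w \<subseteq> {1,2} \<and> count_list w 1 = count_list w 2}"

definition mismatches :: "nat list \<Rightarrow> nat" where
  "mismatches w = card {i. Suc i < length w \<and> w ! i = w ! Suc i}"

definition flip :: "nat \<Rightarrow> nat list \<Rightarrow> nat list" where
  "flip i w = w[i := w ! Suc i, Suc i := w ! i]"

definition allowed_flips :: "nat list \<Rightarrow> nat set" where
  "allowed_flips w = {i. Suc i < length w \<and> w ! i \<noteq> w ! Suc i
                         \<and> mismatches (flip i w) \<le> mismatches w}"

definition cool_step :: "nat list \<Rightarrow> nat list pmf" where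
  "cool_step w = (if mismatches w = 0 then return_pmf w
                  else map_pmf (\<lambda>i. flip i w) (pmf_of_set (allowed_flips w)))"

text \<open>Occurrence (j,k): factor v = w_(j+1)...w_(j+k) with prefix p = take j w.
  Positive Dyck factor of height |p|_1 - |p|_2; negative Dyck factor (letters exchanged)
  of height |p|_2 - |p|_1.\<close>
definition pos_dyck :: "nat list \<Rightarrow> nat \<Rightarrow> nat \<Rightarrow> bool" where
  "pos_dyck w j k \<longleftrightarrow> 0 < k \<and> j + k \<le> length w \<and>
     (let p = take j w; v = take k (drop j w) in
        count_list v 1 = count_list v 2 \<and>
        (\<forall>i\<in>{1..k}. count_list (take i v) 1 \<ge> count_list (take i v) 2) \<and>
        count_list p 1 \<ge> count_list p 2)"

definition neg_dyck :: "nat list \<Rightarrow> nat \<Rightarrow> nat \<Rightarrow> bool" where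
  "neg_dyck w j k \<longleftrightarrow> 0 < k \<and> j + k \<le> length w \<and>
     (let p = take j w; v = take k (drop j w) in
        count_list v 2 = count_list v 1 \<and>
        (\<forall>i\<in>{1..k}. count_list (take i v) 2 \<ge> count_list (take i v) 1) \<and>
        count_list p 2 \<ge> count_list p 1)"

definition dyck_factor :: "nat list \<Rightarrow> nat \<Rightarrow> nat \<Rightarrow> int \<Rightarrow> bool" where
  "dyck_factor w j k h \<longleftrightarrow>
     (pos_dyck w j k \<and> h = int (count_list (take j w) 1) - int (count_list (take j w) 2)) \<or>
     (neg_dyck w j k \<and> h = int (count_list (take j w) 2) - int (count_list (take j w) 1))"

definition max_dyck_factors :: "nat list \<Rightarrow> (nat \<times> nat) set" where
  "max_dyck_factors w = {(j, k). \<exists>h. dyck_factor w j k h \<and>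
      \<not> (\<exists>j' k'. (j', k') \<noteq> (j, k) \<and> j' \<le> j \<and> j + k \<le> j' + k' \<and> dyck_factor w j' k' h)}"

definition phi :: "real \<Rightarrow> nat list \<Rightarrow> real" where
  "phi \<alpha> w = (\<Sum>(j, k)\<in>max_dyck_factors w. (1 + real (count_list (take k (drop j w)) 1)) powr \<alpha>)"

end

theory Submission
  imports Defs
begin

text \<open>Encode a configuration w by its height path H, where H t is the number of 1s minus the
  number of 2s among the first t letters. The maximal positive (negative) Dyck factors of w are
  the maximal excursions of H (of -H) above their starting level, and a factor with L ones
  contributes f L = (1 + L) powr \<alpha> to \<phi>. A flip changes H at a single point, turning a peak
  into a valley or conversely: on the side where the peak lies above 0 this splits one maximal
  excursion with l + r + 1 ones into excursions with l and r ones, and on the other side it merges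
  two such excursions. Since f is concave with second differences at most
  -\<alpha>(1 - \<alpha>)(1 + L) powr (\<alpha> - 2), every allowed flip lowers \<phi> by at least
  c = \<alpha>(1 - \<alpha>)/2 n powr (\<alpha> - 2), except flips at a peak of level at most 0 with a mismatch on
  one side only. Such a flip v has a partner flip nearby: either v and its partner are each
  other's partners, or the partner is not of this kind and is the partner of at most one such flip
  from each side. In both cases the gains of a flip and of the flips it is partner of add up to at
  most -c per flip, so the uniformly chosen allowed flip lowers \<phi> by at least c on average.\<close>

section \<open>Concavity of the weight of a Dyck factor\<close>

lemma powr_midpoint_convex:
  fixes b u t :: real
  assumes b: "b \<le> 0" and u: "0 \<le> t" "t < u"
  shows "2 * u powr b \<le> (u + t) powr b + (u - t) powr b"
proof -
  let ?f = "\<lambda>s. (u + s) powr b + (u - s) powr b"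
  have "?f 0 \<le> ?f t"
  proof (rule DERIV_nonneg_imp_nondecreasing[OF u(1)])
    fix s assume s: "0 \<le> s" "s \<le> t"
    have d: "(?f has_real_derivative (b * (u + s) powr (b - 1) - b * (u - s) powr (b - 1))) (at s)"
      using s u by (auto intro!: derivative_eq_intros simp: algebra_simps)
    have "(u + s) powr (b - 1) \<le> (u - s) powr (b - 1)"
      by (rule powr_mono2') (use s u b in auto)
    then have "0 \<le> b * (u + s) powr (b - 1) - b * (u - s) powr (b - 1)"
      using b by (simp add: mult_left_mono_neg)
    then show "\<exists>y. (?f has_real_derivative y) (at s) \<and> 0 \<le> y" using d by blast
  qed
  then show ?thesis by simp
qed

text \<open>With K = a(1 - a) u powr (a - 2), the function
  \<psi> t = (u + t) powr a + (u - t) powr a - 2 u powr a + K t^2 vanishes at 0, and its derivative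
  vanishes at 0 and is nonincreasing on [0, 1] by the midpoint convexity of powr (a - 2).\<close>
lemma powr_second_difference_le:
  fixes a u :: real
  assumes a: "0 < a" "a < 1" and u: "2 \<le> u"
  shows "(u + 1) powr a - 2 * u powr a + (u - 1) powr a \<le> - a * (1 - a) * u powr (a - 2)"
proof -
  define K where "K = a * (1 - a) * u powr (a - 2)"
  define d1 where "d1 = (\<lambda>t. a * (u + t) powr (a - 1) - a * (u - t) powr (a - 1) + 2 * K * t)"
  define psi where "psi = (\<lambda>t. (u + t) powr a + (u - t) powr a - 2 * u powr a + K * t\<^sup>2)"
  have d1neg: "d1 t \<le> 0" if t: "0 \<le> t" "t \<le> 1" for t
  proof -
    have "d1 t \<le> d1 0"
    proof (rule DERIV_nonpos_imp_nonincreasing[OF t(1)])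
      fix s assume s: "0 \<le> s" "s \<le> t"
      have der: "(d1 has_real_derivative
          (a * ((a - 1) * (u + s) powr (a - 1 - 1)) + a * ((a - 1) * (u - s) powr (a - 1 - 1)) + 2 * K)) (at s)"
        unfolding d1_def using s t u by (auto intro!: derivative_eq_intros simp: algebra_simps)
      have c: "2 * u powr (a - 2) \<le> (u + s) powr (a - 2) + (u - s) powr (a - 2)"
        by (rule powr_midpoint_convex) (use s t u a in auto)
      have e: "a - 1 - 1 = a - 2" by simp
      have "a * ((a - 1) * (u + s) powr (a - 1 - 1)) + a * ((a - 1) * (u - s) powr (a - 1 - 1)) + 2 * K
          = a * (1 - a) * (2 * u powr (a - 2) - ((u + s) powr (a - 2) + (u - s) powr (a - 2)))"
        unfolding e K_def by (simp add: algebra_simps)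
      also have "\<dots> \<le> 0"
        using c a by (intro mult_nonneg_nonpos) auto
      finally show "\<exists>y. (d1 has_real_derivative y) (at s) \<and> y \<le> 0" using der by blast
    qed
    then show ?thesis by (simp add: d1_def)
  qed
  have "psi 1 \<le> psi 0"
  proof (rule DERIV_nonpos_imp_nonincreasing[of 0 1])
    show "(0::real) \<le> 1" by simp
  next
    fix t :: real assume t: "0 \<le> t" "t \<le> 1"
    have "(psi has_real_derivative d1 t) (at t)"
      unfolding psi_def d1_def using t u by (auto intro!: derivative_eq_intros simp: algebra_simps)
    then show "\<exists>y. (psi has_real_derivative y) (at t) \<and> y \<le> 0"
      using d1neg[OF t] by blast
  qed
  then show ?thesis unfolding psi_def K_def by simp
qed

definition dyck_weight :: "real \<Rightarrow> nat \<Rightarrow> real" where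
  "dyck_weight a L = (1 + real L) powr a"

text \<open>In dyck_weight0 the argument 0 stands for an empty, i.e. absent, excursion.\<close>

definition dyck_weight0 :: "real \<Rightarrow> nat \<Rightarrow> real" where
  "dyck_weight0 a L = (if L = 0 then 0 else dyck_weight a L)"

definition weight_incr :: "real \<Rightarrow> nat \<Rightarrow> real" where
  "weight_incr a m = dyck_weight a (Suc m) - dyck_weight a m"

definition drift :: "real \<Rightarrow> nat \<Rightarrow> real" where
  "drift a n = a * (1 - a) / 2 * real n powr (a - 2)"

lemma dyck_weight_0: "dyck_weight a 0 = 1" by (simp add: dyck_weight_def)

lemma dyck_weight0_le:
  "0 \<le> a \<Longrightarrow> dyck_weight0 a m - dyck_weight a (Suc m) \<le> - weight_incr a m"
  by (cases "m = 0") (auto simp: dyck_weight0_def weight_incr_def dyck_weight_def)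

lemma weight_incr_second_difference:
  assumes a: "0 < a" "a < 1" and x: "1 \<le> x"
  shows "weight_incr a x - weight_incr a (x - 1) \<le> - a * (1 - a) * (real x + 1) powr (a - 2)"
proof -
  have "(real x + 1 + 1) powr a - 2 * (real x + 1) powr a + (real x + 1 - 1) powr a
      \<le> - a * (1 - a) * (real x + 1) powr (a - 2)"
    by (rule powr_second_difference_le) (use a x in auto)
  moreover have "real (x - 1) = real x - 1" using x by auto
  ultimately show ?thesis using x unfolding weight_incr_def dyck_weight_def
    by (simp add: algebra_simps)
qed

lemma weight_incr_Suc_le:
  "0 < a \<Longrightarrow> a < 1 \<Longrightarrow> weight_incr a (Suc m) \<le> weight_incr a m"
proof -
  assume a: "0 < a" "a < 1"
  have "weight_incr a (Suc m) - weight_incr a (Suc m - 1) \<le> - a * (1 - a) * (real (Suc m) + 1) powr (a - 2)"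
    by (rule weight_incr_second_difference) (use a in auto)
  moreover have "0 \<le> a * (1 - a) * (real (Suc m) + 1) powr (a - 2)" using a by auto
  ultimately show ?thesis by simp
qed

lemma weight_incr_antimono:
  assumes a: "0 < a" "a < 1" and mm: "m \<le> m'" shows "weight_incr a m' \<le> weight_incr a m"
  using mm
proof (induction m' rule: dec_induct)
  case (step k) then show ?case using weight_incr_Suc_le[of a k] a by linarith
qed simp

lemma powr_diff_ge:
  fixes a x y :: real
  assumes a: "0 < a" "a < 1" and xy: "0 < y" "y \<le> x"
  shows "a * x powr (a - 1) * (x - y) \<le> x powr a - y powr a"
proof -
  let ?f = "\<lambda>s. x powr a - s powr a - a * x powr (a - 1) * (x - s)"
  have "?f x \<le> ?f y"
  proof (rule DERIV_nonpos_imp_nonincreasing[OF xy(2)])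
    fix s assume s: "y \<le> s" "s \<le> x"
    have der: "(?f has_real_derivative (- (a * s powr (a - 1)) + a * x powr (a - 1))) (at s)"
      using s xy by (auto intro!: derivative_eq_intros simp: algebra_simps)
    have "x powr (a - 1) \<le> s powr (a - 1)" by (rule powr_mono2') (use s xy a in auto)
    then have "- (a * s powr (a - 1)) + a * x powr (a - 1) \<le> 0" using a
      by (simp add: mult_left_mono)
    then show "\<exists>z. (?f has_real_derivative z) (at s) \<and> z \<le> 0" using der by blast
  qed
  then show ?thesis by simp
qed

lemma drift_le_weight_incr:
  assumes a: "0 < a" "a < 1" and mn: "m + 1 \<le> n"
  shows "drift a n \<le> weight_incr a m"
proof -
  have n1: "1 \<le> real n" using mn by auto
  have "a * (real m + 2) powr (a - 1) * ((real m + 2) - (real m + 1)) \<le> (real m + 2) powr a - (real m + 1) powr a"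
    by (rule powr_diff_ge) (use a in auto)
  then have A: "a * (real m + 2) powr (a - 1) \<le> weight_incr a m"
    unfolding weight_incr_def dyck_weight_def
    by (simp add: add.commute)
  have "(2 * real n) powr (a - 1) \<le> (real m + 2) powr (a - 1)"
    by (rule powr_mono2') (use a mn in auto)
  moreover have "(2 * real n) powr (a - 1) = 2 powr (a - 1) * real n powr (a - 1)"
    by (simp add: powr_mult)
  moreover have "2 powr (-1) \<le> (2::real) powr (a - 1)" by (rule powr_mono) (use a in auto)
  moreover have "real n powr (a - 2) \<le> real n powr (a - 1)" by (rule powr_mono) (use n1 in auto)
  ultimately have "1 / 2 * real n powr (a - 2) \<le> (real m + 2) powr (a - 1)"
  proof -
    assume h: "(2 * real n) powr (a - 1) \<le> (real m + 2) powr (a - 1)"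
      "(2 * real n) powr (a - 1) = 2 powr (a - 1) * real n powr (a - 1)"
      "2 powr (-1) \<le> (2::real) powr (a - 1)" "real n powr (a - 2) \<le> real n powr (a - 1)"
    have "1 / 2 * real n powr (a - 2) \<le> 2 powr (-1) * real n powr (a - 1)"
      using h(4) by (simp add: powr_minus)
    also have "\<dots> \<le> 2 powr (a - 1) * real n powr (a - 1)"
      using h(3) by (intro mult_right_mono) auto
    finally show ?thesis using h(1,2) by linarith
  qed
  then have "a * (1 / 2 * real n powr (a - 2)) \<le> a * (real m + 2) powr (a - 1)"
    using a by (intro mult_left_mono) auto
  moreover have "drift a n \<le> a * (1 / 2 * real n powr (a - 2))"
  proof -
    have "a * (1 - a) / 2 * real n powr (a - 2) \<le> a / 2 * real n powr (a - 2)"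
      using a by (intro mult_right_mono) auto
    then show ?thesis unfolding drift_def by simp
  qed
  ultimately show ?thesis using A by linarith
qed

lemma weight_2_drift_bound:
  assumes a: "0 < a" "a < 1" and n: "2 \<le> n"
  shows "2 * dyck_weight a 2 - 3 * dyck_weight a 1 + 3 * drift a n \<le> 0"
proof -
  have s: "weight_incr a 1 - weight_incr a (1 - 1) \<le> - a * (1 - a) * (real 1 + 1) powr (a - 2)"
    by (rule weight_incr_second_difference) (use a in auto)
  have "real n powr (a - 2) \<le> 2 powr (a - 2)" by (rule powr_mono2') (use a n in auto)
  then have "a * (1 - a) * real n powr (a - 2) \<le> a * (1 - a) * 2 powr (a - 2)"
    using a by (intro mult_left_mono) auto
  moreover have "dyck_weight a 1 \<le> 2"
  proof -
    have "(2::real) powr a \<le> 2 powr 1" by (rule powr_mono) (use a in auto)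
    then show ?thesis unfolding dyck_weight_def by simp
  qed
  moreover have "2 * dyck_weight a 2 - 3 * dyck_weight a 1 = 2 * (weight_incr a 1 - weight_incr a 0) + dyck_weight a 1 - 2"
    unfolding weight_incr_def by (simp add: dyck_weight_0 numeral_2_eq_2)
  moreover have "0 \<le> a * (1 - a) * real n powr (a - 2)" using a by auto
  ultimately show ?thesis using s unfolding drift_def by (simp add: field_simps)
qed

lemma weight_incr_step_le_drift:
  assumes a: "0 < a" "a < 1" and x: "1 \<le> x" "x + 1 \<le> n"
  shows "weight_incr a x - weight_incr a (x - 1) + 2 * drift a n \<le> 0"
proof -
  have "real n powr (a - 2) \<le> (real x + 1) powr (a - 2)"
    by (rule powr_mono2') (use a x in auto)
  then have "a * (1 - a) * real n powr (a - 2) \<le> a * (1 - a) * (real x + 1) powr (a - 2)"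
    using a by (intro mult_left_mono) auto
  then show ?thesis using weight_incr_second_difference[OF a x(1)] unfolding drift_def by auto
qed

lemma dyck_weight_merge_le:
  assumes a: "0 < a" "a < 1" and xy: "1 \<le> x" "1 \<le> y"
  shows "dyck_weight a (x + y + 1) - dyck_weight a x - dyck_weight a y \<le> 2 * dyck_weight a 2 - 3 * dyck_weight a 1"
proof -
  have mono: "dyck_weight a (x + y + 1) - dyck_weight a x - dyck_weight a y \<le> dyck_weight a (1 + y + 1) - dyck_weight a 1 - dyck_weight a y" if "1 \<le> x" for x
    using that
  proof (induction x rule: dec_induct)
    case (step k)
    have "weight_incr a (k + y + 1) \<le> weight_incr a k" by (rule weight_incr_antimono) (use a in auto)
    then show ?case using step unfolding weight_incr_def by simp
  qed simp
  have mono2: "dyck_weight a (1 + y + 1) - dyck_weight a 1 - dyck_weight a y \<le> dyck_weight a 3 - 2 * dyck_weight a 1" if "1 \<le> y" for y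
    using that
  proof (induction y rule: dec_induct)
    case base then show ?case by (simp add: numeral_3_eq_3)
  next
    case (step k)
    have "weight_incr a (k + 2) \<le> weight_incr a k" by (rule weight_incr_antimono) (use a in auto)
    then show ?case using step unfolding weight_incr_def by (simp add: numeral_2_eq_2)
  qed
  have "weight_incr a 2 \<le> weight_incr a 1" by (rule weight_incr_antimono) (use a in auto)
  then have "dyck_weight a 3 - 2 * dyck_weight a 1 \<le> 2 * dyck_weight a 2 - 3 * dyck_weight a 1"
    unfolding weight_incr_def by (simp add: numeral_3_eq_3 numeral_2_eq_2)
  then show ?thesis using mono[OF xy(1)] mono2[OF xy(2)] by linarith
qed


section \<open>Lattice paths and their maximal excursions\<close>

type_synonym path = "nat \<Rightarrow> int"

definition lattice_path :: "path \<Rightarrow> nat \<Rightarrow> bool" where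
  "lattice_path P N \<longleftrightarrow> (\<forall>t<N. P (Suc t) = P t + 1 \<or> P (Suc t) = P t - 1)"

text \<open>The maximal interval [run_start P j, j] on which P stays at or above P j, and symmetrically
  [j, run_end P N j] inside [0, N].\<close>

definition run_start :: "path \<Rightarrow> nat \<Rightarrow> nat" where
  "run_start P j = (if \<exists>t<j. P t < P j then Suc (GREATEST t. t < j \<and> P t < P j) else 0)"

lemma run_start_props:
  shows "run_start P j \<le> j"
    "\<And>t. run_start P j \<le> t \<Longrightarrow> t \<le> j \<Longrightarrow> P j \<le> P t"
    "run_start P j = 0 \<or> P (run_start P j - 1) < P j"
proof -
  show "run_start P j \<le> j"
  proof (cases "\<exists>t<j. P t < P j")
    case True
    then obtain t where t: "t < j \<and> P t < P j" by blast
    have "(GREATEST t. t < j \<and> P t < P j) < j"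
      using GreatestI_nat[of "\<lambda>t. t < j \<and> P t < P j" t j] t by auto
    then show ?thesis using True by (simp add: run_start_def)
  qed (auto simp add: run_start_def)
  show "run_start P j = 0 \<or> P (run_start P j - 1) < P j"
  proof (cases "\<exists>t<j. P t < P j")
    case True
    then obtain t where t: "t < j \<and> P t < P j" by blast
    have "(GREATEST t. t < j \<and> P t < P j) < j \<and> P (GREATEST t. t < j \<and> P t < P j) < P j"
      using GreatestI_nat[of "\<lambda>t. t < j \<and> P t < P j" t j] t by auto
    then show ?thesis using True by (simp add: run_start_def)
  qed (auto simp add: run_start_def)
  fix t assume a: "run_start P j \<le> t" "t \<le> j"
  show "P j \<le> P t"
  proof (rule ccontr)
    assume "\<not> P j \<le> P t"
    then have tt: "t < j \<and> P t < P j" using a by (cases "t = j") auto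
    then have ex: "\<exists>t<j. P t < P j" by blast
    have "t \<le> (GREATEST t. t < j \<and> P t < P j)"
      using Greatest_le_nat[of "\<lambda>t. t < j \<and> P t < P j" t j] tt by auto
    then show False using a ex by (simp add: run_start_def)
  qed
qed

lemma run_start_unique:
  assumes "s \<le> j"
    "\<And>t. s \<le> t \<Longrightarrow> t \<le> j \<Longrightarrow> P j \<le> P t"
    "s = 0 \<or> P (s - 1) < P j"
  shows "run_start P j = s"
proof (cases "s = 0")
  case True
  have "\<forall>t<j. P j \<le> P t" using assms(2) True by auto
  then have "\<not> (\<exists>t<j. P t < P j)" by (auto simp: not_less)
  then show ?thesis using True by (simp add: run_start_def)
next
  case False
  then have ps: "P (s - 1) < P j" "s - 1 < j" using assms by auto
  then have ex: "\<exists>t<j. P t < P j" by blast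
  have g: "(GREATEST t. t < j \<and> P t < P j) = s - 1"
  proof (rule Greatest_equality)
    show "s - 1 < j \<and> P (s - 1) < P j" using ps by auto
    fix y assume "y < j \<and> P y < P j"
    then show "y \<le> s - 1" using assms(2)[of y] by (cases "s \<le> y") auto
  qed
  show ?thesis using ex g False by (simp add: run_start_def)
qed

lemma run_start_cong:
  assumes "\<And>t. t \<le> j \<Longrightarrow> P t = P' t"
  shows "run_start P j = run_start P' j"
proof -
  have "(\<exists>t<j. P t < P j) = (\<exists>t<j. P' t < P' j)" using assms by auto
  moreover have "(\<lambda>t. t < j \<and> P t < P j) = (\<lambda>t. t < j \<and> P' t < P' j)"
    using assms by auto
  ultimately show ?thesis unfolding run_start_def by simp
qed

definition reverse_path :: "path \<Rightarrow> nat \<Rightarrow> path" where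
  "reverse_path P N = (\<lambda>t. P (N - t))"

definition run_end :: "path \<Rightarrow> nat \<Rightarrow> nat \<Rightarrow> nat" where
  "run_end P N j = N - run_start (reverse_path P N) (N - j)"

lemma run_end_props:
  assumes "j \<le> N"
  shows "j \<le> run_end P N j" "run_end P N j \<le> N"
    "\<And>t. j \<le> t \<Longrightarrow> t \<le> run_end P N j \<Longrightarrow> P j \<le> P t"
    "run_end P N j = N \<or> P (Suc (run_end P N j)) < P j"
proof -
  note L = run_start_props[of "reverse_path P N" "N - j"]
  show "j \<le> run_end P N j" "run_end P N j \<le> N" using L(1) assms by (auto simp: run_end_def)
  fix t assume a: "j \<le> t" "t \<le> run_end P N j"
  then have "run_start (reverse_path P N) (N - j) \<le> N - t" "N - t \<le> N - j" "t \<le> N"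
    using L(1) assms by (auto simp: run_end_def)
  then have "reverse_path P N (N - j) \<le> reverse_path P N (N - t)" using L(2) by blast
  then show "P j \<le> P t" using assms \<open>t \<le> N\<close> by (simp add: reverse_path_def)
next
  note L = run_start_props[of "reverse_path P N" "N - j"]
  show "run_end P N j = N \<or> P (Suc (run_end P N j)) < P j"
  proof (cases "run_start (reverse_path P N) (N - j) = 0")
    case False
    then have "P (N - (run_start (reverse_path P N) (N - j) - 1)) < P (N - (N - j))"
      using L(3) by (auto simp: reverse_path_def)
    moreover have "N - (run_start (reverse_path P N) (N - j) - 1) = Suc (run_end P N j)"
      using False L(1) assms by (auto simp: run_end_def)
    ultimately show ?thesis using assms by auto
  qed (simp add: run_end_def)
qed

lemma run_end_unique:
  assumes "j \<le> e" "e \<le> N"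
    "\<And>t. j \<le> t \<Longrightarrow> t \<le> e \<Longrightarrow> P j \<le> P t"
    "e = N \<or> P (Suc e) < P j"
  shows "run_end P N j = e"
proof -
  have "run_start (reverse_path P N) (N - j) = N - e"
  proof (rule run_start_unique)
    show "N - e \<le> N - j" using assms by auto
    fix t assume "N - e \<le> t" "t \<le> N - j"
    then show "reverse_path P N (N - j) \<le> reverse_path P N t" using assms(3)[of "N - t"] assms(1,2)
      by (auto simp: reverse_path_def)
  next
    show "N - e = 0 \<or> reverse_path P N (N - e - 1) < reverse_path P N (N - j)"
    proof (cases "e = N")
      case False
      then have "N - e - 1 = N - Suc e" "N - (N - Suc e) = Suc e" "N - (N - j) = j"
        using assms(1,2) by auto
      then show ?thesis using assms(4) False by (simp add: reverse_path_def)
    qed simp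
  qed
  then show ?thesis using assms by (simp add: run_end_def)
qed

lemma run_end_across_peak:
  assumes v: "0 < v" "v < N" and peak: "P (v - 1) = h" "P (Suc v) = h" "P v = h + 1"
  shows "run_end P N (v - 1) = run_end P N (Suc v)"
proof (rule run_end_unique)
  have "Suc v \<le> N" using v by auto
  note R = run_end_props[OF this, where P = P]
  show "v - 1 \<le> run_end P N (Suc v)" "run_end P N (Suc v) \<le> N" using R by auto
  fix t assume t: "v - 1 \<le> t" "t \<le> run_end P N (Suc v)"
  consider "t = v - 1" | "t = v" | "Suc v \<le> t" using t by linarith
  then show "P (v - 1) \<le> P t"
    by cases (use R(3)[of t] t peak in auto)
next
  show "run_end P N (Suc v) = N \<or> P (Suc (run_end P N (Suc v))) < P (v - 1)"
    using run_end_props(4)[of "Suc v" N P] v peak by auto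
qed

lemma run_end_cong:
  assumes "j \<le> N" "\<And>t. j \<le> t \<Longrightarrow> t \<le> N \<Longrightarrow> P t = P' t"
  shows "run_end P N j = run_end P' N j"
proof -
  have "run_start (reverse_path P N) (N - j) = run_start (reverse_path P' N) (N - j)"
    by (rule run_start_cong) (use assms in \<open>auto simp: reverse_path_def\<close>)
  then show ?thesis by (simp add: run_end_def)
qed

lemma lattice_pathD:
  "lattice_path P N \<Longrightarrow> t < N \<Longrightarrow> P (Suc t) = P t + 1 \<or> P (Suc t) = P t - 1"
  by (simp add: lattice_path_def)

lemma lattice_path_parity:
  assumes "lattice_path P N" "s \<le> t" "t \<le> N"
  shows "even (P t - P s + int (t - s))"
  using assms(2,3)
proof (induction t)
  case 0 then show ?case by simp
next
  case (Suc t)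
  show ?case
  proof (cases "s = Suc t")
    case False
    then have ih: "even (P t - P s + int (t - s))" using Suc by auto
    have "P (Suc t) = P t + 1 \<or> P (Suc t) = P t - 1" using lattice_pathD[OF assms(1)] Suc by auto
    moreover have "int (Suc t - s) = int (t - s) + 1" using Suc False by auto
    ultimately show ?thesis using ih by auto
  qed simp
qed

lemma even_div2_pos: "even (x::nat) \<Longrightarrow> (0 < x div 2 \<longleftrightarrow> 0 < x)"
  by (auto elim!: evenE)

lemma lattice_path_even_dist:
  assumes "lattice_path P N" "s \<le> t" "t \<le> N" "P s = P t"
  shows "even (t - s)"
  using lattice_path_parity[OF assms(1-3)] assms(4) by simp

text \<open>The maximal excursions of P above a nonnegative level are the intervals [j, run_end P N j]
  starting with an up-step that is not preceded by a down-step; dyck_sum adds their weights.\<close>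

definition dyck_start :: "path \<Rightarrow> nat \<Rightarrow> nat \<Rightarrow> bool" where
  "dyck_start P N j \<longleftrightarrow> j < N \<and> 0 \<le> P j \<and> P (Suc j) = P j + 1 \<and> (j = 0 \<or> P (j - 1) = P j - 1)"

definition dyck_sum :: "real \<Rightarrow> path \<Rightarrow> nat \<Rightarrow> real" where
  "dyck_sum a P N = (\<Sum>j\<in>{j. dyck_start P N j}. dyck_weight a ((run_end P N j - j) div 2))"

lemma finite_dyck_start: "finite {j. dyck_start P N j}"
  by (rule finite_subset[of _ "{..<N}"]) (auto simp: dyck_start_def)

lemma run_start_level:
  assumes st: "lattice_path P N" and P0: "P 0 = 0" and j: "j \<le> N" and c: "0 \<le> P j \<or> 0 < run_start P j"
  shows "P (run_start P j) = P j"
proof (cases "run_start P j = 0")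
  case True
  then have "P j \<le> 0" using run_start_props(2)[of P j 0] P0 by auto
  then show ?thesis using True c P0 by auto
next
  case False
  note L = run_start_props[of P j]
  have "P (run_start P j - 1) < P j" "P j \<le> P (run_start P j)" using L False by auto
  moreover have "P (run_start P j) = P (run_start P j - 1) + 1 \<or> P (run_start P j) = P (run_start P j - 1) - 1"
    using lattice_pathD[OF st, of "run_start P j - 1"] False L(1) j by auto
  ultimately show ?thesis by auto
qed

lemma run_end_level:
  assumes st: "lattice_path P N" and PN: "P N = 0" and j: "j \<le> N" and h: "0 \<le> P j"
  shows "P (run_end P N j) = P j"
proof -
  note R = run_end_props[OF j, where P=P]
  show ?thesis
  proof (cases "run_end P N j = N")
    case True
    then have "P j \<le> 0" using R(3)[of N] PN j by auto
    then show ?thesis using True PN h by auto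
  next
    case False
    then have "P (Suc (run_end P N j)) < P j" "P j \<le> P (run_end P N j)" using R by auto
    moreover have "P (Suc (run_end P N j)) = P (run_end P N j) + 1 \<or> P (Suc (run_end P N j)) = P (run_end P N j) - 1"
      using lattice_pathD[OF st, of "run_end P N j"] False R(2) by auto
    ultimately show ?thesis by auto
  qed
qed

section \<open>Lowering a peak\<close>

definition left_run :: "path \<Rightarrow> nat \<Rightarrow> nat" where
  "left_run P v = (v - 1 - run_start P (v - 1)) div 2"

definition right_run :: "path \<Rightarrow> nat \<Rightarrow> nat \<Rightarrow> nat" where
  "right_run P N v = (run_end P N (Suc v) - Suc v) div 2"

definition split_gain :: "real \<Rightarrow> nat \<Rightarrow> nat \<Rightarrow> real" where
  "split_gain a l r = dyck_weight0 a l + dyck_weight0 a r - dyck_weight a (l + r + 1)"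

locale peak_lowering =
  fixes P :: path and N v :: nat and h :: int
  assumes path: "lattice_path P N" and P0: "P 0 = 0" and PN: "P N = 0"
    and v: "0 < v" "v < N"
    and peak: "P (v - 1) = h" "P (Suc v) = h" "P v = h + 1"
begin

definition lowered :: path where
  "lowered = P(v := h - 1)"

lemma step: "t < N \<Longrightarrow> P (Suc t) = P t + 1 \<or> P (Suc t) = P t - 1"
  using lattice_pathD[OF path] by blast

lemma dyck_start_lowered:
  assumes "j \<noteq> v - 1" "j \<noteq> v" "j \<noteq> Suc v"
  shows "dyck_start lowered N j = dyck_start P N j"
proof -
  have "lowered j = P j" "lowered (Suc j) = P (Suc j)" "j = 0 \<or> lowered (j - 1) = P (j - 1)"
    using assms v by (auto simp: lowered_def)
  then show ?thesis unfolding dyck_start_def by auto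
qed

lemma not_dyck_start_near_peak:
  "\<not> dyck_start P N v" "\<not> dyck_start lowered N v"
  "\<not> dyck_start P N (Suc v)" "\<not> dyck_start lowered N (v - 1)"
  using peak v by (auto simp: dyck_start_def lowered_def)

lemma dyck_start_before_peak:
  "dyck_start P N (v - 1) \<longleftrightarrow> 0 \<le> h \<and> (v - 1 = 0 \<or> P (v - 1 - 1) = h - 1)"
  using peak v by (auto simp: dyck_start_def)

lemma dyck_start_lowered_after_peak: "dyck_start lowered N (Suc v) \<Longrightarrow> 0 \<le> h"
  using peak by (auto simp: dyck_start_def lowered_def)

text \<open>A maximal run ending before the peak, or running through it at a level below h, does not
  notice the lowering; the exception is the run that starts where the peak's own run starts.\<close>
lemma run_end_lowered_before:
  assumes j: "dyck_start P N j" "j < v - 1" "P j \<noteq> h \<or> j \<noteq> run_start P (v - 1)"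
  shows "run_end lowered N j = run_end P N j"
proof -
  define e where "e = run_end P N j"
  have jN: "j \<le> N" using j v by auto
  note R = run_end_props[OF jN, where P=P, folded e_def]
  show ?thesis
  proof (cases "e < v")
    case True
    have "run_end lowered N j = e"
    proof (rule run_end_unique)
      show "j \<le> e" "e \<le> N" using R by auto
      fix t assume "j \<le> t" "t \<le> e"
      then show "lowered j \<le> lowered t" using R(3) True j v by (auto simp: lowered_def)
    next
      show "e = N \<or> lowered (Suc e) < lowered j"
      proof (cases "Suc e = v")
        case True
        then have "P v < P j" using R(4) v by auto
        then show ?thesis using True j v peak by (auto simp: lowered_def)
      next
        case False
        then show ?thesis using R(4) j \<open>e < v\<close> v by (auto simp: lowered_def)
      qed
    qed
    then show ?thesis using e_def by simp
  next
    case False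
    then have le: "P j \<le> h" using R(3)[of "v - 1"] j peak by auto
    have ne: "P j \<noteq> h"
    proof
      assume eq: "P j = h"
      have "run_start P (v - 1) = j"
      proof (rule run_start_unique)
        show "j \<le> v - 1" using j by auto
        fix t assume "j \<le> t" "t \<le> v - 1"
        then show "P (v - 1) \<le> P t" using R(3)[of t] False peak eq by auto
      next
        show "j = 0 \<or> P (j - 1) < P (v - 1)" using j(1) eq peak by (auto simp: dyck_start_def)
      qed
      then show False using j(3) eq by auto
    qed
    have "run_end lowered N j = e"
    proof (rule run_end_unique)
      show "j \<le> e" "e \<le> N" using R by auto
      fix t assume "j \<le> t" "t \<le> e"
      then show "lowered j \<le> lowered t" using R(3) j v le ne by (auto simp: lowered_def)
    next
      show "e = N \<or> lowered (Suc e) < lowered j" using R(4) j v False by (auto simp: lowered_def)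
    qed
    then show ?thesis using e_def by simp
  qed
qed

lemma run_end_lowered_after:
  "Suc v \<le> j \<Longrightarrow> j \<le> N \<Longrightarrow> run_end lowered N j = run_end P N j"
  by (rule run_end_cong) (auto simp: lowered_def)

lemma dyck_sum_lowered_below_zero:
  assumes h: "h < 0"
  shows "dyck_sum a lowered N = dyck_sum a P N"
proof -
  have starts: "dyck_start lowered N j \<longleftrightarrow> dyck_start P N j" for j
  proof -
    consider "j = v - 1" | "j = v" | "j = Suc v" | "j \<noteq> v - 1" "j \<noteq> v"
      "j \<noteq> Suc v" by blast
    then show ?thesis
    proof cases
      case 1
      then show ?thesis using not_dyck_start_near_peak(4) dyck_start_before_peak h by simp
    next
      case 2
      then show ?thesis using not_dyck_start_near_peak(1,2) by simp
    next
      case 3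
      then show ?thesis using not_dyck_start_near_peak(3) dyck_start_lowered_after_peak h by auto
    qed (rule dyck_start_lowered)
  qed
  have "run_end lowered N j = run_end P N j" if j: "dyck_start P N j" for j
  proof (cases "j < v - 1")
    case True
    have "P j \<noteq> h" using j h unfolding dyck_start_def by auto
    then show ?thesis using run_end_lowered_before[OF j True] by blast
  next
    case False
    have "j \<noteq> v - 1" using j dyck_start_before_peak h by auto
    moreover have "j \<noteq> v" using j not_dyck_start_near_peak(1) by auto
    moreover have "j \<le> N" using j unfolding dyck_start_def by simp
    ultimately show ?thesis using False run_end_lowered_after[of j] by simp
  qed
  then show ?thesis unfolding dyck_sum_def starts by (intro sum.cong) simp_all
qed

end

text \<open>At a peak of nonnegative level h the maximal run through the peak, from its start s to its
  end e, is cut into the runs from s to v - 1 and from v + 1 to e.\<close>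
locale nonneg_peak_lowering = peak_lowering +
  assumes nonneg: "0 \<le> h"
begin

definition start :: nat where
  "start = run_start P (v - 1)"

definition stop :: nat where
  "stop = run_end P N (Suc v)"

lemma start_le: "start \<le> v - 1"
  and start_min: "\<And>t. start \<le> t \<Longrightarrow> t \<le> v - 1 \<Longrightarrow> h \<le> P t"
  and start_left: "start = 0 \<or> P (start - 1) < h"
  using run_start_props[of P "v - 1"] peak unfolding start_def by auto

lemma stop_ge: "Suc v \<le> stop" "stop \<le> N"
  and stop_min: "\<And>t. Suc v \<le> t \<Longrightarrow> t \<le> stop \<Longrightarrow> h \<le> P t"
  and stop_right: "stop = N \<or> P (Suc stop) < h"
  using run_end_props[where j = "Suc v" and N = N and P = P] peak v unfolding stop_def by auto

lemma P_start: "P start = h"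
  using run_start_level[OF path P0, of "v - 1"] peak v nonneg unfolding start_def by auto

lemma P_stop: "P stop = h"
  using run_end_level[OF path PN, of "Suc v"] peak v nonneg unfolding stop_def by auto

lemma dyck_start_start: "dyck_start P N start"
proof -
  have "P (Suc start) = h + 1"
  proof (cases "start = v - 1")
    case False
    then have "h \<le> P (Suc start)" using start_min[of "Suc start"] start_le by auto
    then show ?thesis using step[of start] P_start start_le v by auto
  qed (use peak v in auto)
  moreover have "start = 0 \<or> P (start - 1) = h - 1"
    using start_left step[of "start - 1"] P_start start_le v by (cases "start = 0") auto
  ultimately show ?thesis using P_start nonneg start_le v unfolding dyck_start_def by auto
qed

lemma even_left: "even (v - 1 - start)"
  using lattice_path_even_dist[OF path start_le] P_start peak v by auto

lemma run_end_start: "run_end P N start = stop"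
proof (rule run_end_unique)
  show "start \<le> stop" "stop \<le> N" using start_le stop_ge by auto
  fix t assume t: "start \<le> t" "t \<le> stop"
  consider "t \<le> v - 1" | "t = v" | "Suc v \<le> t" by linarith
  then show "P start \<le> P t"
    by cases (use start_min stop_min t peak P_start in auto)
next
  show "stop = N \<or> P (Suc stop) < P start" using stop_right P_start by auto
qed

lemma run_end_lowered_start: "run_end lowered N start = v - 1"
proof (rule run_end_unique)
  show "start \<le> v - 1" "v - 1 \<le> N" using start_le v by auto
  fix t assume "start \<le> t" "t \<le> v - 1"
  then show "lowered start \<le> lowered t" using start_min P_start v start_le
    by (auto simp: lowered_def)
next
  show "v - 1 = N \<or> lowered (Suc (v - 1)) < lowered start"
    using v P_start start_le by (auto simp: lowered_def)
qed

lemma dyck_start_lowered_start: "dyck_start lowered N start \<longleftrightarrow> 0 < left_run P v"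
proof -
  have "dyck_start lowered N start \<longleftrightarrow> start < v - 1"
    using dyck_start_lowered[of start] not_dyck_start_near_peak(4) dyck_start_start start_le
    by (cases "start = v - 1") auto
  also have "\<dots> \<longleftrightarrow> 0 < left_run P v"
    using even_div2_pos[OF even_left] unfolding left_run_def start_def by auto
  finally show ?thesis .
qed

lemma dyck_start_lowered_after: "dyck_start lowered N (Suc v) \<longleftrightarrow> 0 < right_run P N v"
proof -
  have "dyck_start lowered N (Suc v) \<longleftrightarrow> Suc v < N \<and> P (Suc (Suc v)) = h + 1"
    using peak nonneg by (simp add: dyck_start_def lowered_def)
  also have "\<dots> \<longleftrightarrow> Suc (Suc (Suc v)) \<le> stop"
  proof
    assume a: "Suc v < N \<and> P (Suc (Suc v)) = h + 1"
    have "stop \<noteq> Suc v"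
    proof
      assume "stop = Suc v"
      then have "Suc v = N \<or> P (Suc (Suc v)) < h" using stop_right by simp
      then show False using a by linarith
    qed
    moreover have "stop \<noteq> Suc (Suc v)"
    proof
      assume "stop = Suc (Suc v)"
      then show False using P_stop a by simp
    qed
    ultimately show "Suc (Suc (Suc v)) \<le> stop" using stop_ge(1) by linarith
  next
    assume a: "Suc (Suc (Suc v)) \<le> stop"
    then have "h \<le> P (Suc (Suc v))" "Suc v < N" using stop_min[of "Suc (Suc v)"] stop_ge(2) by auto
    then show "Suc v < N \<and> P (Suc (Suc v)) = h + 1" using step[of "Suc v"] peak by auto
  qed
  also have "\<dots> \<longleftrightarrow> 0 < right_run P N v"
    unfolding right_run_def stop_def[symmetric] using stop_ge(1) by linarith
  finally show ?thesis .
qed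

lemma dyck_start_before_peak_eq: "dyck_start P N (v - 1) \<Longrightarrow> v - 1 = start"
  using dyck_start_before_peak peak unfolding start_def by (intro run_start_unique[symmetric]) auto

lemma dyck_sum_lowered_nonneg:
  "dyck_sum a lowered N - dyck_sum a P N = split_gain a (left_run P v) (right_run P N v)"
proof -
  define g where "g = (\<lambda>Q j. dyck_weight a ((run_end Q N j - j) div 2))"
  define C where "C = {j. dyck_start P N j \<and> j \<noteq> start \<and> j \<noteq> v - 1 \<and> j \<noteq> v \<and> j \<noteq> Suc v}"
  have old: "{j. dyck_start P N j} = insert start C"
    using dyck_start_before_peak_eq not_dyck_start_near_peak dyck_start_start unfolding C_def by auto
  have new: "{j. dyck_start lowered N j}
      = C \<union> {j \<in> {start, Suc v}. dyck_start lowered N j}"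
  proof (intro set_eqI iffI)
    fix j assume "j \<in> {j. dyck_start lowered N j}"
    then have j: "dyck_start lowered N j" by simp
    have "j \<noteq> v - 1" "j \<noteq> v" using j not_dyck_start_near_peak(2,4) by auto
    then show "j \<in> C \<union> {j \<in> {start, Suc v}. dyck_start lowered N j}"
      using j dyck_start_lowered[of j] unfolding C_def by auto
  qed (use dyck_start_lowered in \<open>auto simp: C_def\<close>)
  have finC: "finite C" unfolding C_def by (rule finite_subset[OF _ finite_dyck_start]) auto
  have start_ne: "start \<noteq> Suc v" using start_le v by auto
  have gC: "sum (g lowered) C = sum (g P) C"
  proof (rule sum.cong)
    fix j assume j: "j \<in> C"
    then have "run_end lowered N j = run_end P N j"
      using run_end_lowered_before[of j] run_end_lowered_after[of j]
      unfolding C_def start_def dyck_start_def by (cases "j < v - 1") auto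
    then show "g lowered j = g P j" unfolding g_def by simp
  qed simp
  obtain k where k: "v - 1 - start = 2 * k" using even_left by (rule evenE)
  have "stop - start = 2 * (k + 1) + (stop - Suc v)" using k start_le stop_ge v by auto
  then have "(stop - start) div 2 = left_run P v + right_run P N v + 1"
    using k unfolding left_run_def right_run_def start_def[symmetric] stop_def[symmetric] by simp
  then have g_start: "g P start = dyck_weight a (left_run P v + right_run P N v + 1)"
    unfolding g_def run_end_start by simp
  have "(if dyck_start lowered N start then g lowered start else 0) = dyck_weight0 a (left_run P v)"
    using dyck_start_lowered_start run_end_lowered_start
    unfolding g_def dyck_weight0_def left_run_def start_def[symmetric] by simp
  moreover have "(if dyck_start lowered N (Suc v) then g lowered (Suc v) else 0)
      = dyck_weight0 a (right_run P N v)"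
    using dyck_start_lowered_after run_end_lowered_after[of "Suc v"] stop_ge
    unfolding g_def dyck_weight0_def right_run_def stop_def[symmetric] by simp
  ultimately have "sum (g lowered) {j \<in> {start, Suc v}. dyck_start lowered N j}
      = dyck_weight0 a (left_run P v) + dyck_weight0 a (right_run P N v)"
    by (subst sum.inter_filter) (simp_all add: start_ne)
  moreover have "sum (g lowered) {j. dyck_start lowered N j}
      = sum (g lowered) C + sum (g lowered) {j \<in> {start, Suc v}. dyck_start lowered N j}"
    unfolding new by (rule sum.union_disjoint) (use finC in \<open>auto simp: C_def\<close>)
  moreover have "sum (g P) {j. dyck_start P N j} = g P start + sum (g P) C"
    unfolding old by (rule sum.insert) (use finC in \<open>auto simp: C_def\<close>)
  ultimately show ?thesis
    using gC g_start unfolding dyck_sum_def split_gain_def g_def by simp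
qed

end

lemma lattice_path_upd:
  assumes "lattice_path P N" "0 < v" "v < N" "P (v - 1) = P (Suc v)"
    "x = P (v - 1) + 1 \<or> x = P (v - 1) - 1"
  shows "lattice_path (P(v := x)) N"
  unfolding lattice_path_def
proof (intro allI impI)
  fix t assume t: "t < N"
  consider "Suc t = v" | "t = v" | "Suc t \<noteq> v \<and> t \<noteq> v" by blast
  then show "(P(v := x)) (Suc t) = (P(v := x)) t + 1 \<or> (P(v := x)) (Suc t) = (P(v := x)) t - 1"
  proof cases
    case 1 then have "t = v - 1" by auto
    then show ?thesis using 1 assms by auto
  next
    case 2 then show ?thesis using assms by auto
  next
    case 3 then show ?thesis using lattice_pathD[OF assms(1) t] by auto
  qed
qed

lemma dyck_sum_lower_peak:
  assumes "lattice_path P N" "P 0 = 0" "P N = 0" "0 < v" "v < N"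
    "P (v - 1) = h" "P (Suc v) = h" "P v = h + 1"
  shows "dyck_sum a (P(v := h - 1)) N - dyck_sum a P N
    = (if 0 \<le> h then split_gain a (left_run P v) (right_run P N v) else 0)"
proof -
  interpret peak_lowering P N v h using assms by unfold_locales
  show ?thesis
  proof (cases "0 \<le> h")
    case True
    interpret nonneg_peak_lowering P N v h using True by unfold_locales
    show ?thesis using dyck_sum_lowered_nonneg True unfolding lowered_def by simp
  qed (use dyck_sum_lowered_below_zero in \<open>simp add: lowered_def\<close>)
qed

lemma dyck_sum_raise_valley:
  assumes st: "lattice_path P N" and P0: "P 0 = 0" and PN: "P N = 0"
    and v: "0 < v" "v < N" and pk: "P (v - 1) = g" "P (Suc v) = g" "P v = g - 1"
  shows "dyck_sum a (P(v := g + 1)) N - dyck_sum a P N = (if 0 \<le> g then - split_gain a (left_run P v) (right_run P N v) else 0)"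
proof -
  define P' where "P' = P(v := g + 1)"
  have st': "lattice_path P' N" unfolding P'_def by (rule lattice_path_upd) (use assms in auto)
  have P0': "P' 0 = 0" "P' N = 0" using assms by (auto simp: P'_def)
  have pk': "P' (v - 1) = g" "P' (Suc v) = g" "P' v = g + 1" using assms by (auto simp: P'_def)
  have bk: "P'(v := g - 1) = P" using pk unfolding P'_def by auto
  have L: "left_run P' v = left_run P v" unfolding left_run_def
    by (subst run_start_cong[of "v - 1" P' P]) (use v in \<open>auto simp: P'_def\<close>)
  have R: "right_run P' N v = right_run P N v" unfolding right_run_def
    by (subst run_end_cong[of "Suc v" N P' P]) (use v in \<open>auto simp: P'_def\<close>)
  have X: "dyck_sum a P N - dyck_sum a P' N = (if 0 \<le> g then split_gain a (left_run P v) (right_run P N v) else 0)"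
    using dyck_sum_lower_peak[OF st' P0' v pk', of a] unfolding bk L R .
  have "dyck_sum a P' N - dyck_sum a P N = (if 0 \<le> g then - split_gain a (left_run P v) (right_run P N v) else 0)"
    using X by auto
  then show ?thesis unfolding P'_def .
qed

lemma lattice_path_reverse: "lattice_path P N \<Longrightarrow> lattice_path (reverse_path P N) N"
  unfolding lattice_path_def reverse_path_def
proof (intro allI impI)
  fix t assume a: "\<forall>t<N. P (Suc t) = P t + 1 \<or> P (Suc t) = P t - 1" "t < N"
  then have "P (Suc (N - Suc t)) = P (N - Suc t) + 1 \<or> P (Suc (N - Suc t)) = P (N - Suc t) - 1"
    by auto
  moreover have "Suc (N - Suc t) = N - t" using a by auto
  ultimately show "P (N - Suc t) = P (N - t) + 1 \<or> P (N - Suc t) = P (N - t) - 1" by auto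
qed

lemma right_run_eq_left_run_reverse:
  "v < N \<Longrightarrow> right_run P N v = left_run (reverse_path P N) (N - v)"
proof -
  assume v: "v < N"
  have "run_start (reverse_path P N) (N - Suc v) \<le> N - Suc v" by (rule run_start_props)
  then show ?thesis unfolding right_run_def left_run_def run_end_def using v
    by (simp add: diff_diff_add)
qed

lemma left_run_pos:
  assumes st: "lattice_path P N" and P0: "P 0 = 0" and v: "0 < v" "v \<le> N" and h: "0 \<le> P (v - 1)"
  shows "0 < left_run P v \<longleftrightarrow> 2 \<le> v \<and> P (v - 2) = P (v - 1) + 1"
proof -
  define j0 where "j0 = run_start P (v - 1)"
  note L = run_start_props[of P "v - 1", folded j0_def]
  have Pj0: "P j0 = P (v - 1)" using run_start_level[OF st P0, of "v - 1"] h v unfolding j0_def by auto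
  have ev: "even (v - 1 - j0)" using lattice_path_even_dist[OF st L(1)] Pj0 v by auto
  have "0 < left_run P v \<longleftrightarrow> j0 < v - 1" unfolding left_run_def j0_def[symmetric]
    using even_div2_pos[OF ev] L(1) by auto
  also have "\<dots> \<longleftrightarrow> 2 \<le> v \<and> P (v - 2) = P (v - 1) + 1"
  proof
    assume a: "j0 < v - 1"
    then have "P (v - 1) \<le> P (v - 2)" using L(2)[of "v - 2"] by auto
    moreover have "P (Suc (v - 2)) = P (v - 2) + 1 \<or> P (Suc (v - 2)) = P (v - 2) - 1"
      using lattice_pathD[OF st, of "v - 2"] a v by auto
    moreover have "Suc (v - 2) = v - 1" using a by auto
    ultimately show "2 \<le> v \<and> P (v - 2) = P (v - 1) + 1" using a by auto
  next
    assume a: "2 \<le> v \<and> P (v - 2) = P (v - 1) + 1"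
    show "j0 < v - 1"
    proof (rule ccontr)
      assume "\<not> j0 < v - 1"
      then have "j0 = v - 1" using L(1) by auto
      then have "P (v - 1 - 1) < P (v - 1)" using L(3) a by auto
      moreover have "v - 1 - 1 = v - 2" by auto
      ultimately show False using a by auto
    qed
  qed
  finally show ?thesis .
qed

lemma right_run_pos:
  assumes st: "lattice_path P N" and PN: "P N = 0" and v: "v < N" and h: "0 \<le> P (Suc v)"
  shows "0 < right_run P N v \<longleftrightarrow> v + 2 \<le> N \<and> P (v + 2) = P (Suc v) + 1"
proof -
  define R where "R = reverse_path P N"
  have stR: "lattice_path R N" using lattice_path_reverse[OF st] unfolding R_def .
  have R0: "R 0 = 0" using PN unfolding R_def reverse_path_def by simp
  have RR: "R (N - v - 1) = P (Suc v)"
    using v unfolding R_def reverse_path_def by (simp add: Suc_diff_Suc)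
  have L: "0 < left_run R (N - v) \<longleftrightarrow> 2 \<le> N - v \<and> R (N - v - 2) = R (N - v - 1) + 1"
    using left_run_pos[OF stR R0, of "N - v"] v h RR by auto
  have "2 \<le> N - v \<Longrightarrow> R (N - v - 2) = P (v + 2)"
    unfolding R_def reverse_path_def by auto
  moreover have "2 \<le> N - v \<longleftrightarrow> v + 2 \<le> N" by auto
  ultimately have "0 < left_run R (N - v) \<longleftrightarrow> v + 2 \<le> N \<and> P (v + 2) = P (Suc v) + 1"
    using L RR by auto
  then show ?thesis using right_run_eq_left_run_reverse[OF v, of P] unfolding R_def by simp
qed

lemma left_run_bound: "2 * left_run P v \<le> v - 1"
  unfolding left_run_def by auto

lemma right_run_bound: "v < N \<Longrightarrow> 2 * right_run P N v + v + 1 \<le> N"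
proof -
  assume "v < N"
  then have "run_end P N (Suc v) \<le> N" "Suc v \<le> run_end P N (Suc v)"
    using run_end_props(1,2)[of "Suc v" N P] by auto
  moreover have "2 * ((run_end P N (Suc v) - Suc v) div 2) \<le> run_end P N (Suc v) - Suc v" by simp
  ultimately show ?thesis unfolding right_run_def by linarith
qed


section \<open>Pairing the allowed flips\<close>

lemma ascending_run_value:
  assumes "\<And>t. a \<le> t \<Longrightarrow> t < b \<Longrightarrow> P (Suc t) = P t + 1" "a \<le> b"
  shows "P b = P a + int (b - a)"
  using assms(2,1)
proof (induction b rule: dec_induct)
  case (step k)
  then have "P (Suc k) = P k + 1" by auto
  then show ?case using step by auto
qed simp

lemma run_start_antimono:
  assumes "a \<le> b" "\<And>t. a \<le> t \<Longrightarrow> t \<le> b \<Longrightarrow> P b \<le> P t"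
  shows "run_start P b \<le> run_start P a"
proof (cases "\<exists>t<b. P t < P b")
  case False then show ?thesis by (auto simp add: run_start_def)
next
  case True
  define g where "g = (GREATEST t. t < b \<and> P t < P b)"
  obtain t where t: "t < b" "P t < P b" using True by blast
  have g: "g < b" "P g < P b"
    using GreatestI_nat[of "\<lambda>t. t < b \<and> P t < P b" t b] t unfolding g_def by auto
  have ga: "g < a" using assms(2)[of g] g by (cases "a \<le> g") auto
  have "P g < P a" using g assms(2)[of a] assms(1) by auto
  then have ex: "\<exists>t<a. P t < P a" using ga by blast
  have "g \<le> (GREATEST t. t < a \<and> P t < P a)"
    using Greatest_le_nat[of "\<lambda>t. t < a \<and> P t < P a" g a] ga \<open>P g < P a\<close>
      by auto
  then show ?thesis using True ex unfolding run_start_def g_def by auto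
qed

text \<open>The foot of the maximal ascending run of P that ends at v; right_partner is its mirror image.\<close>

definition left_partner :: "path \<Rightarrow> nat \<Rightarrow> nat" where
  "left_partner P v = Suc (GREATEST t. t < v - 1 \<and> P (Suc t) < P t)"

lemma left_partner_props:
  assumes st: "lattice_path P N" and P0: "P 0 = 0" and v: "2 \<le> v" "v < N"
    and h: "P (v - 1) \<le> 0" and pk: "P v = P (v - 1) + 1" and lm: "P (v - 2) = P (v - 1) - 1"
  shows "1 \<le> left_partner P v" "left_partner P v + 2 \<le> v"
    "P (left_partner P v - 1) = P (left_partner P v) + 1"
    "\<And>t. left_partner P v \<le> t \<Longrightarrow> t < v \<Longrightarrow> P (Suc t) = P t + 1"
proof -
  have ex: "\<exists>t. t < v - 1 \<and> P (Suc t) < P t"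
  proof (rule ccontr)
    assume nex: "\<not> (\<exists>t. t < v - 1 \<and> P (Suc t) < P t)"
    have "\<And>t. 0 \<le> t \<Longrightarrow> t < v - 1 \<Longrightarrow> P (Suc t) = P t + 1"
    proof -
      fix t assume "0 \<le> t" "t < v - 1"
      then have "t < N" "\<not> P (Suc t) < P t" using v nex by auto
      then show "P (Suc t) = P t + 1" using lattice_pathD[OF st, of t] by auto
    qed
    then have "P (v - 1) = P 0 + int (v - 1 - 0)" by (intro ascending_run_value) auto
    then show False using h P0 v by auto
  qed
  then obtain t0 where t0: "t0 < v - 1" "P (Suc t0) < P t0" by blast
  define g where "g = (GREATEST t. t < v - 1 \<and> P (Suc t) < P t)"
  have g: "g < v - 1" "P (Suc g) < P g"
    using GreatestI_nat[of "\<lambda>t. t < v - 1 \<and> P (Suc t) < P t" t0 "v - 1"] t0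
    unfolding g_def by auto
  have gmax: "\<And>t. t < v - 1 \<Longrightarrow> P (Suc t) < P t \<Longrightarrow> t \<le> g"
    using Greatest_le_nat[of "\<lambda>t. t < v - 1 \<and> P (Suc t) < P t" _ "v - 1"]
      unfolding g_def by auto
  have lm_eq: "left_partner P v = Suc g" unfolding left_partner_def g_def by simp
  have gd: "P (Suc g) = P g - 1" using lattice_pathD[OF st, of g] g v by auto
  have gne: "g \<noteq> v - 2"
  proof
    assume "g = v - 2"
    then have "Suc g = v - 1" using v by auto
    then show False using g lm \<open>g = v - 2\<close> by auto
  qed
  show "1 \<le> left_partner P v" using lm_eq by simp
  show "left_partner P v + 2 \<le> v" using lm_eq g gne by auto
  show "P (left_partner P v - 1) = P (left_partner P v) + 1" using lm_eq gd by simp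
  fix t assume t: "left_partner P v \<le> t" "t < v"
  show "P (Suc t) = P t + 1"
  proof (cases "t = v - 1")
    case True then show ?thesis using pk v by auto
  next
    case False
    then have "t < v - 1" using t by auto
    moreover have "\<not> P (Suc t) < P t" using gmax[of t] t lm_eq \<open>t < v - 1\<close> by auto
    ultimately show ?thesis using lattice_pathD[OF st, of t] v by auto
  qed
qed

lemma left_partner_eq:
  assumes "1 \<le> w" "w + 2 \<le> u" "P (w - 1) = P w + 1"
    "\<And>t. w \<le> t \<Longrightarrow> t < u \<Longrightarrow> P (Suc t) = P t + 1"
  shows "left_partner P u = w"
proof -
  have "(GREATEST t. t < u - 1 \<and> P (Suc t) < P t) = w - 1"
  proof (rule Greatest_equality)
    show "w - 1 < u - 1 \<and> P (Suc (w - 1)) < P (w - 1)" using assms by auto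
    fix y assume y: "y < u - 1 \<and> P (Suc y) < P y"
    show "y \<le> w - 1"
    proof (rule ccontr)
      assume "\<not> y \<le> w - 1"
      then have "w \<le> y" "y < u" using assms(1) y by auto
      then have "P (Suc y) = P y + 1" using assms(4)[of y] by auto
      then show False using y by auto
    qed
  qed
  then show ?thesis unfolding left_partner_def using assms(1) by auto
qed

definition right_partner :: "path \<Rightarrow> nat \<Rightarrow> nat \<Rightarrow> nat" where
  "right_partner P N v = N - left_partner (reverse_path P N) (N - v)"

lemma right_partner_eq:
  assumes "w + 1 \<le> N" "u + 2 \<le> w" "P (Suc w) = P w + 1"
    "\<And>t. u \<le> t \<Longrightarrow> t < w \<Longrightarrow> P (Suc t) = P t - 1"
  shows "right_partner P N u = w"
proof -
  have "left_partner (reverse_path P N) (N - u) = N - w"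
  proof (rule left_partner_eq)
    show "1 \<le> N - w" "N - w + 2 \<le> N - u" using assms by auto
    show "reverse_path P N (N - w - 1) = reverse_path P N (N - w) + 1" using assms(1,3)
      by (simp add: reverse_path_def Suc_diff_Suc)
    fix t assume t: "N - w \<le> t" "t < N - u"
    have "P (Suc (N - Suc t)) = P (N - Suc t) - 1" using assms(4)[of "N - Suc t"] t assms by auto
    moreover have "Suc (N - Suc t) = N - t" using t by auto
    ultimately show "reverse_path P N (Suc t) = reverse_path P N t + 1"
      unfolding reverse_path_def by auto
  qed
  then show ?thesis unfolding right_partner_def using assms by auto
qed

lemma split_gain_degenerate:
  "l = 0 \<or> r = 0 \<Longrightarrow> split_gain a l r = dyck_weight0 a (l + r) - dyck_weight a (l + r + 1)"
  unfolding split_gain_def dyck_weight0_def by auto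

lemma drift_nonneg: "0 < a \<Longrightarrow> a < 1 \<Longrightarrow> 0 \<le> drift a n"
  unfolding drift_def by auto

lemma lattice_path_scale:
  "lattice_path P N \<Longrightarrow> c = 1 \<or> c = -1 \<Longrightarrow> lattice_path (\<lambda>t. c * P t) N"
  unfolding lattice_path_def by (auto simp: algebra_simps)

lemma runs_bound:
  assumes "v < N" "N = 2 * n"
  shows "left_run P v + right_run Q N v + 1 \<le> n"
  using left_run_bound[of P v] right_run_bound[OF assms(1), of Q] assms by auto

locale balanced_path =
  fixes H :: path and N n :: nat and a :: real
  assumes st: "lattice_path H N" and H0: "H 0 = 0" and HN: "H N = 0" and Nn: "N = 2 * n"
    and a: "0 < a" "a < 1"
begin

text \<open>The flip at word position i corresponds to the point v = i + 1 of the height path; it is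
  possible iff v is an extremum and allowed iff the steps on one side of v continue in the same
  direction, i.e. the flip does not create more mismatches than it removes.\<close>

definition extremum :: "nat \<Rightarrow> bool" where
  "extremum v \<longleftrightarrow> 0 < v \<and> v < N \<and> H (v - 1) = H (Suc v)"

definition left_mismatch :: "nat \<Rightarrow> bool" where
  "left_mismatch v \<longleftrightarrow> 2 \<le> v \<and> H (v - 1) - H (v - 2) = H v - H (v - 1)"

definition right_mismatch :: "nat \<Rightarrow> bool" where
  "right_mismatch v \<longleftrightarrow> v + 2 \<le> N \<and> H (v + 2) - H (Suc v) = H (Suc v) - H v"

definition allowed :: "nat set" where
  "allowed = {v. extremum v \<and> (left_mismatch v \<or> right_mismatch v)}"

definition orient :: "nat \<Rightarrow> int" where
  "orient v = H v - H (v - 1)"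

text \<open>The path H or -H, whichever has a peak at v.\<close>
definition peak_path :: "nat \<Rightarrow> path" where
  "peak_path v = (\<lambda>t. orient v * H t)"

definition valley_path :: "nat \<Rightarrow> path" where
  "valley_path v = (\<lambda>t. - (orient v * H t))"

definition peak_level :: "nat \<Rightarrow> int" where
  "peak_level v = peak_path v (v - 1)"

definition flip_gain :: "nat \<Rightarrow> real" where
  "flip_gain v =
     (if 0 \<le> peak_level v then split_gain a (left_run (peak_path v) v) (right_run (peak_path v) N v)
      else 0) +
     (if peak_level v \<le> 0 then - split_gain a (left_run (valley_path v) v) (right_run (valley_path v) N v)
      else 0)"

text \<open>The allowed flips whose gain alone may exceed -drift a n; each is compensated by its partner.\<close>

definition deficient :: "nat set" where
  "deficient = {v \<in> allowed. peak_level v \<le> 0 \<and> left_mismatch v \<noteq> right_mismatch v}"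

definition partner :: "nat \<Rightarrow> nat" where
  "partner v = (if left_mismatch v then left_partner (peak_path v) v else right_partner (peak_path v) N v)"

definition deficient_run :: "nat \<Rightarrow> nat" where
  "deficient_run v = (if left_mismatch v then left_run (valley_path v) v else right_run (valley_path v) N v)"

lemma orient_cases: "extremum v \<Longrightarrow> orient v = 1 \<or> orient v = -1"
  using lattice_pathD[OF st, of "v - 1"] unfolding extremum_def orient_def by auto

lemma orient_sq: "extremum v \<Longrightarrow> orient v * orient v = 1"
  using orient_cases by fastforce

lemma peak_path_balanced:
  "extremum v \<Longrightarrow> lattice_path (peak_path v) N \<and> peak_path v 0 = 0 \<and> peak_path v N = 0"
  unfolding peak_path_def using lattice_path_scale[OF st] orient_cases H0 HN by auto

lemma valley_path_balanced:
  "extremum v \<Longrightarrow> lattice_path (valley_path v) N \<and> valley_path v 0 = 0 \<and> valley_path v N = 0"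
proof -
  assume e: "extremum v"
  have "valley_path v = (\<lambda>t. (- orient v) * H t)" unfolding valley_path_def by auto
  moreover have "- orient v = 1 \<or> - orient v = -1" using orient_cases[OF e] by auto
  ultimately have "lattice_path (valley_path v) N"
    using lattice_path_scale[OF st, of "- orient v"] by simp
  then show ?thesis using H0 HN by (simp add: valley_path_def)
qed

lemma valley_path_eq: "valley_path v t = - peak_path v t" unfolding valley_path_def peak_path_def by simp

lemma extremum_values:
  assumes e: "extremum v"
  shows "peak_path v (v - 1) = peak_level v" "peak_path v (Suc v) = peak_level v"
    "peak_path v v = peak_level v + 1"
    "valley_path v (v - 1) = - peak_level v" "valley_path v (Suc v) = - peak_level v"
      "valley_path v v = - peak_level v - 1"
proof -
  have s: "orient v * orient v = 1" using orient_sq[OF e] .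
  have Hv: "H v = H (v - 1) + orient v" unfolding orient_def by simp
  show 1: "peak_path v (v - 1) = peak_level v" unfolding peak_level_def ..
  show 2: "peak_path v (Suc v) = peak_level v"
    using e unfolding peak_level_def peak_path_def extremum_def by simp
  show 3: "peak_path v v = peak_level v + 1" unfolding peak_level_def peak_path_def
    using s Hv by (simp add: algebra_simps)
  show "valley_path v (v - 1) = - peak_level v" "valley_path v (Suc v) = - peak_level v"
    "valley_path v v = - peak_level v - 1"
    using 1 2 3 by (simp_all add: valley_path_eq)
qed

lemma left_mismatch_iff:
  "extremum v \<Longrightarrow> left_mismatch v \<longleftrightarrow> 2 \<le> v \<and> peak_path v (v - 2) = peak_level v - 1"
proof -
  assume e: "extremum v"
  have Hv: "H v - H (v - 1) = orient v" unfolding orient_def ..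
  show ?thesis using orient_cases[OF e] Hv
    unfolding left_mismatch_def peak_path_def peak_level_def by (elim disjE) auto
qed

lemma not_left_mismatch_iff:
  "extremum v \<Longrightarrow> 2 \<le> v \<Longrightarrow> \<not> left_mismatch v \<longleftrightarrow> peak_path v (v - 2) = peak_level v + 1"
proof -
  assume e: "extremum v" and v: "2 \<le> v"
  have st': "lattice_path (peak_path v) N" using peak_path_balanced[OF e] by auto
  have "peak_path v (Suc (v - 2)) = peak_path v (v - 2) + 1 \<or> peak_path v (Suc (v - 2)) = peak_path v (v - 2) - 1"
    using lattice_pathD[OF st', of "v - 2"] e v unfolding extremum_def by auto
  moreover have "Suc (v - 2) = v - 1" using v by auto
  ultimately show ?thesis using left_mismatch_iff[OF e] v extremum_values[OF e] by auto
qed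

lemma right_mismatch_iff:
  "extremum v \<Longrightarrow> right_mismatch v \<longleftrightarrow> v + 2 \<le> N \<and> peak_path v (v + 2) = peak_level v - 1"
proof -
  assume e: "extremum v"
  have Hv: "H v - H (v - 1) = orient v" unfolding orient_def ..
  have h1: "H (Suc v) = H (v - 1)" using e unfolding extremum_def by simp
  show ?thesis using orient_cases[OF e] Hv h1
    unfolding right_mismatch_def peak_path_def peak_level_def by (elim disjE) auto
qed

lemma not_right_mismatch_iff:
  "extremum v \<Longrightarrow> v + 2 \<le> N \<Longrightarrow> \<not> right_mismatch v \<longleftrightarrow> peak_path v (v + 2) = peak_level v + 1"
proof -
  assume e: "extremum v" and v: "v + 2 \<le> N"
  have st': "lattice_path (peak_path v) N" using peak_path_balanced[OF e] by auto
  have "peak_path v (Suc (Suc v)) = peak_path v (Suc v) + 1 \<or> peak_path v (Suc (Suc v)) = peak_path v (Suc v) - 1"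
    using lattice_pathD[OF st', of "Suc v"] v by auto
  then show ?thesis using right_mismatch_iff[OF e] v extremum_values[OF e] by (auto simp: numeral_2_eq_2)
qed

lemma left_run_peak_pos:
  "extremum v \<Longrightarrow> 0 \<le> peak_level v \<Longrightarrow> 0 < left_run (peak_path v) v \<longleftrightarrow> 2 \<le> v \<and> \<not> left_mismatch v"
proof -
  assume e: "extremum v" and h: "0 \<le> peak_level v"
  have "0 < left_run (peak_path v) v \<longleftrightarrow> 2 \<le> v \<and> peak_path v (v - 2) = peak_path v (v - 1) + 1"
    using left_run_pos[of "peak_path v" N v] peak_path_balanced[OF e] e h extremum_values[OF e]
      unfolding extremum_def by auto
  then show ?thesis using not_left_mismatch_iff[OF e] extremum_values[OF e] by auto
qed

lemma right_run_peak_pos: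
  "extremum v \<Longrightarrow> 0 \<le> peak_level v \<Longrightarrow> 0 < right_run (peak_path v) N v \<longleftrightarrow> v + 2 \<le> N \<and> \<not> right_mismatch v"
proof -
  assume e: "extremum v" and h: "0 \<le> peak_level v"
  have "0 < right_run (peak_path v) N v \<longleftrightarrow> v + 2 \<le> N \<and> peak_path v (v + 2) = peak_path v (Suc v) + 1"
    using right_run_pos[of "peak_path v" N v] peak_path_balanced[OF e] e h extremum_values[OF e]
      unfolding extremum_def by auto
  then show ?thesis using not_right_mismatch_iff[OF e] extremum_values[OF e] by auto
qed

lemma left_run_valley_pos:
  "extremum v \<Longrightarrow> peak_level v \<le> 0 \<Longrightarrow> 0 < left_run (valley_path v) v \<longleftrightarrow> left_mismatch v"
proof -
  assume e: "extremum v" and h: "peak_level v \<le> 0"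
  have "0 < left_run (valley_path v) v \<longleftrightarrow> 2 \<le> v \<and> valley_path v (v - 2) = valley_path v (v - 1) + 1"
    using left_run_pos[of "valley_path v" N v] valley_path_balanced[OF e] e h extremum_values[OF e]
      unfolding extremum_def by auto
  then show ?thesis using left_mismatch_iff[OF e] extremum_values[OF e] by (auto simp: valley_path_eq)
qed

lemma right_run_valley_pos:
  "extremum v \<Longrightarrow> peak_level v \<le> 0 \<Longrightarrow> 0 < right_run (valley_path v) N v \<longleftrightarrow> right_mismatch v"
proof -
  assume e: "extremum v" and h: "peak_level v \<le> 0"
  have "0 < right_run (valley_path v) N v \<longleftrightarrow> v + 2 \<le> N \<and> valley_path v (v + 2) = valley_path v (Suc v) + 1"
    using right_run_pos[of "valley_path v" N v] valley_path_balanced[OF e] e h extremum_values[OF e]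
      unfolding extremum_def by auto
  then show ?thesis using right_mismatch_iff[OF e] extremum_values[OF e] by (auto simp: valley_path_eq)
qed

lemma allowed_imp_n_ge_2: "v \<in> allowed \<Longrightarrow> 2 \<le> n"
  using Nn unfolding allowed_def extremum_def left_mismatch_def right_mismatch_def by auto

lemma left_run_le_n: "extremum v \<Longrightarrow> left_run P v + 1 \<le> n"
  using runs_bound[of v N n P P] Nn unfolding extremum_def by auto

lemma right_run_le_n: "extremum v \<Longrightarrow> right_run P N v + 1 \<le> n"
  using runs_bound[of v N n P P] Nn unfolding extremum_def by auto

lemma split_gain_degenerate_le:
  assumes "l = 0 \<or> r = 0" "l + r + 1 \<le> n"
  shows "split_gain a l r \<le> - weight_incr a (l + r)" "split_gain a l r \<le> - drift a n"
    "split_gain a l r \<le> 0"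
proof -
  show 1: "split_gain a l r \<le> - weight_incr a (l + r)"
    using split_gain_degenerate[OF assms(1)] dyck_weight0_le[of a "l + r"] a by simp
  show 2: "split_gain a l r \<le> - drift a n" using 1 drift_le_weight_incr[OF a assms(2)] by linarith
  show "split_gain a l r \<le> 0" using 2 drift_nonneg[OF a, of n] by linarith
qed

lemma valley_gain_both_mismatches:
  assumes e: "extremum v" and h: "peak_level v \<le> 0"
    and both: "left_mismatch v" "right_mismatch v" and n2: "2 \<le> n"
  shows "- split_gain a (left_run (valley_path v) v) (right_run (valley_path v) N v) \<le> - 3 * drift a n"
proof -
  have pos: "1 \<le> left_run (valley_path v) v" "1 \<le> right_run (valley_path v) N v"
    using left_run_valley_pos[OF e h] right_run_valley_pos[OF e h] both by auto
  then have "- split_gain a (left_run (valley_path v) v) (right_run (valley_path v) N v)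
      \<le> 2 * dyck_weight a 2 - 3 * dyck_weight a 1"
    using dyck_weight_merge_le[OF a pos] unfolding split_gain_def dyck_weight0_def by simp
  then show ?thesis using weight_2_drift_bound[OF a n2] by linarith
qed

lemma flip_gain_nondeficient:
  assumes v: "v \<in> allowed" "v \<notin> deficient"
  shows "flip_gain v + drift a n \<le> 0"
proof -
  have e: "extremum v" and lr: "left_mismatch v \<or> right_mismatch v"
    using v unfolding allowed_def by auto
  have bnd: "left_run P v + right_run Q N v + 1 \<le> n" for P Q
    using runs_bound[of v N n P Q] e Nn unfolding extremum_def by auto
  show ?thesis
  proof (cases "0 < peak_level v")
    case True
    have "left_run (peak_path v) v = 0 \<or> right_run (peak_path v) N v = 0"
      using lr left_run_peak_pos[OF e] right_run_peak_pos[OF e] True by auto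
    then have "split_gain a (left_run (peak_path v) v) (right_run (peak_path v) N v) \<le> - drift a n"
      using split_gain_degenerate_le(2) bnd[of "peak_path v" "peak_path v"] by blast
    then show ?thesis using True unfolding flip_gain_def by auto
  next
    case False
    then have h: "peak_level v \<le> 0" by auto
    then have both: "left_mismatch v" "right_mismatch v" using v lr unfolding deficient_def by auto
    have s: "(if 0 \<le> peak_level v then split_gain a (left_run (peak_path v) v) (right_run (peak_path v) N v)
        else 0) \<le> 0"
    proof (cases "0 \<le> peak_level v")
      case True
      then have "left_run (peak_path v) v = 0" "right_run (peak_path v) N v = 0"
        using left_run_peak_pos[OF e] right_run_peak_pos[OF e] both by auto
      then show ?thesis
        using True split_gain_degenerate_le(3) bnd[of "peak_path v" "peak_path v"] by auto
    qed simp
    show ?thesis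
      using valley_gain_both_mismatches[OF e h both allowed_imp_n_ge_2[OF v(1)]] s h drift_nonneg[OF a, of n]
      unfolding flip_gain_def by auto
  qed
qed

lemma flip_gain_deficient:
  assumes v: "v \<in> deficient"
  shows "flip_gain v \<le> weight_incr a (deficient_run v)" "1 \<le> deficient_run v"
    "deficient_run v + 1 \<le> n"
proof -
  have e: "extremum v" and h: "peak_level v \<le> 0" and x: "left_mismatch v \<noteq> right_mismatch v" using v unfolding deficient_def allowed_def by auto
  have bnd: "left_run P v + right_run Q N v + 1 \<le> n" for P Q
    using runs_bound[of v N n P Q] e Nn unfolding extremum_def by auto
  have s: "(if 0 \<le> peak_level v then split_gain a (left_run (peak_path v) v) (right_run (peak_path v) N v) else 0) \<le> 0"
  proof (cases "0 \<le> peak_level v")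
    case True
    then have "left_run (peak_path v) v = 0 \<or> right_run (peak_path v) N v = 0"
      using left_run_peak_pos[OF e] right_run_peak_pos[OF e] x by auto
    then show ?thesis
      using True split_gain_degenerate_le(3)[of "left_run (peak_path v) v"
      "right_run (peak_path v) N v"] bnd[of "peak_path v" "peak_path v"] by auto
  qed simp
  have q: "- split_gain a (left_run (valley_path v) v) (right_run (valley_path v) N v) = weight_incr a (deficient_run v) \<and> 1 \<le> deficient_run v"
  proof (cases "left_mismatch v")
    case True
    then have "0 < left_run (valley_path v) v" "right_run (valley_path v) N v = 0"
      using left_run_valley_pos[OF e h] right_run_valley_pos[OF e h] x by auto
    then show ?thesis
      using True unfolding deficient_run_def split_gain_def dyck_weight0_def weight_incr_def by auto
  next
    case False
    then have "0 < right_run (valley_path v) N v" "left_run (valley_path v) v = 0"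
      using left_run_valley_pos[OF e h] right_run_valley_pos[OF e h] x by auto
    then show ?thesis
      using False unfolding deficient_run_def split_gain_def dyck_weight0_def weight_incr_def by auto
  qed
  show "flip_gain v \<le> weight_incr a (deficient_run v)" using s q h unfolding flip_gain_def by auto
  show "1 \<le> deficient_run v" using q by auto
  show "deficient_run v + 1 \<le> n"
    using left_run_le_n[OF e] right_run_le_n[OF e] unfolding deficient_run_def by auto
qed

lemma partner_left:
  assumes v: "v \<in> deficient" "left_mismatch v"
  shows "partner v \<in> allowed" "partner v < v" "right_mismatch (partner v)"
    "peak_path (partner v) = valley_path v" "valley_path (partner v) = peak_path v"
    "0 \<le> peak_level (partner v)" "- peak_level v \<le> peak_level (partner v)"
      "right_run (peak_path (partner v)) N (partner v) = 0"
    "left_run (peak_path (partner v)) (partner v) + 1 \<le> deficient_run v"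
    "1 \<le> partner v" "partner v + 2 \<le> v"
      "peak_path v (partner v - 1) = peak_path v (partner v) + 1"
    "\<And>t. partner v \<le> t \<Longrightarrow> t < v \<Longrightarrow> peak_path v (Suc t) = peak_path v t + 1"
    "peak_level (partner v) = int (v - partner v) - peak_level v - 2" "orient (partner v) = - orient v"
proof -
  define P where "P = peak_path v"
  define u where "u = partner v"
  have e: "extremum v" and h: "peak_level v \<le> 0" using v unfolding deficient_def allowed_def by auto
  have pth: "lattice_path P N" "P 0 = 0" "P N = 0" using peak_path_balanced[OF e] unfolding P_def by auto
  have vals: "P (v - 1) = peak_level v" "P (Suc v) = peak_level v" "P v = peak_level v + 1"
    using extremum_values[OF e] unfolding P_def by auto
  have lm: "2 \<le> v" "P (v - 2) = peak_level v - 1"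
    using left_mismatch_iff[OF e] v unfolding P_def by auto
  have vN: "v < N" using e unfolding extremum_def by auto
  have ueq: "u = left_partner P v" unfolding u_def partner_def P_def using v by simp
  note LPP = left_partner_props[OF pth(1,2) lm(1) vN, folded ueq]
  have L: "1 \<le> u" "u + 2 \<le> v" "P (u - 1) = P u + 1"
    "\<And>t. u \<le> t \<Longrightarrow> t < v \<Longrightarrow> P (Suc t) = P t + 1"
    using LPP vals lm h by auto
  have Pt: "P t = P u + int (t - u)" if "u \<le> t" "t \<le> v" for t
    by (rule ascending_run_value) (use L(4) that in auto)
  have Pu: "P u = peak_level v + 1 - int (v - u)" using Pt[of v] vals L by auto
  have Pu1: "P (Suc u) = P u + 1" "P (u + 2) = P u + 2" using Pt[of "Suc u"] Pt[of "u + 2"] L by auto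
  have eu: "extremum u"
  proof -
    have "P (u - 1) = P (Suc u)" using L Pu1 by auto
    then have "orient v * H (u - 1) = orient v * H (Suc u)" unfolding P_def peak_path_def by simp
    then have "H (u - 1) = H (Suc u)" using orient_cases[OF e] by auto
    then show ?thesis using L vN unfolding extremum_def by auto
  qed
  have sgu: "orient u = - orient v"
  proof -
    have "P u - P (u - 1) = -1" using L by auto
    then have "orient v * (H u - H (u - 1)) = -1"
      unfolding P_def peak_path_def by (simp add: algebra_simps)
    then have "H u - H (u - 1) = - orient v" using orient_cases[OF e] by (elim disjE) auto
    then show ?thesis by (simp add: orient_def)
  qed
  have PPu: "peak_path u = valley_path v" unfolding peak_path_def valley_path_def using sgu by auto
  have QQu: "valley_path u = peak_path v" unfolding peak_path_def valley_path_def using sgu by auto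
  have hhu: "peak_level u = int (v - u) - peak_level v - 2"
  proof -
    have "peak_level u = - P (u - 1)" unfolding peak_level_def PPu P_def valley_path_eq ..
    then show ?thesis using L(3) Pu by simp
  qed
  have RMu: "right_mismatch u"
  proof -
    have "peak_path u (u + 2) = peak_level u - 1" unfolding PPu valley_path_eq
      using Pu1 hhu Pu unfolding P_def by simp
    then show ?thesis using right_mismatch_iff[OF eu] L vN by auto
  qed
  have rpc0: "right_run (peak_path u) N u = 0"
  proof -
    have "run_end (valley_path v) N (Suc u) = Suc u"
      by (rule run_end_unique) (use L vN Pu1 in \<open>auto simp: valley_path_eq P_def\<close>)
    then show ?thesis unfolding right_run_def PPu by simp
  qed
  have lpcb: "left_run (peak_path u) u + 1 \<le> left_run (valley_path v) v"
  proof -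
    define Q where "Q = valley_path v"
    have "run_start Q (v - 1) \<le> run_start Q (u - 1)"
    proof (rule run_start_antimono)
      show "u - 1 \<le> v - 1" using L by auto
      fix t assume t: "u - 1 \<le> t" "t \<le> v - 1"
      have "P t \<le> P (v - 1)"
      proof (cases "t = u - 1")
        case True then show ?thesis using L(3) Pu vals L(2) by auto
      next
        case False
        then have "u \<le> t" using t L by auto
        then show ?thesis using Pt[of t] Pt[of "v - 1"] t L by auto
      qed
      then show "Q (v - 1) \<le> Q t" unfolding Q_def valley_path_eq P_def by simp
    qed
    moreover have "run_start Q (u - 1) \<le> u - 1" by (rule run_start_props)
    ultimately have "(u - 1 - run_start Q (u - 1)) + 2 \<le> v - 1 - run_start Q (v - 1)" using L by auto
    then have "(u - 1 - run_start Q (u - 1) + 2) div 2 \<le> (v - 1 - run_start Q (v - 1)) div 2"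
      by (rule div_le_mono)
    then show ?thesis unfolding left_run_def PPu Q_def by simp
  qed
  show "partner v \<in> allowed" using eu RMu unfolding allowed_def u_def by auto
  show "partner v < v" "1 \<le> partner v" "partner v + 2 \<le> v" using L unfolding u_def by auto
  show "right_mismatch (partner v)" using RMu unfolding u_def .
  show "peak_path (partner v) = valley_path v" "valley_path (partner v) = peak_path v"
    using PPu QQu unfolding u_def by auto
  show "0 \<le> peak_level (partner v)" "- peak_level v \<le> peak_level (partner v)"
    "peak_level (partner v) = int (v - partner v) - peak_level v - 2"
    using hhu h L unfolding u_def by auto
  show "right_run (peak_path (partner v)) N (partner v) = 0" using rpc0 unfolding u_def .
  show "left_run (peak_path (partner v)) (partner v) + 1 \<le> deficient_run v"
    using lpcb v unfolding u_def deficient_run_def by auto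
  show "peak_path v (partner v - 1) = peak_path v (partner v) + 1" using L unfolding u_def P_def by auto
  show "orient (partner v) = - orient v" using sgu unfolding u_def .
  show "\<And>t. partner v \<le> t \<Longrightarrow> t < v \<Longrightarrow> peak_path v (Suc t) = peak_path v t + 1" using L unfolding u_def P_def by auto
qed

lemma balanced_path_reverse: "balanced_path (reverse_path H N) N n a"
  using lattice_path_reverse[OF st] H0 HN Nn a unfolding balanced_path_def reverse_path_def by auto

end

context balanced_path begin

interpretation Rev: balanced_path "reverse_path H N" N n a by (rule balanced_path_reverse)

lemma reverse_extremum:
  "w \<le> N \<Longrightarrow> Rev.extremum (N - w) \<longleftrightarrow> extremum w"
proof -
  assume w: "w \<le> N"
  show ?thesis
  proof (cases "0 < w \<and> w < N")
    case True
    then have "N - w - 1 = N - Suc w" "Suc (N - w) = N - (w - 1)" by auto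
    then show ?thesis
      using True unfolding Rev.extremum_def extremum_def unfolding reverse_path_def by auto
  next
    case False then show ?thesis using w unfolding Rev.extremum_def extremum_def by auto
  qed
qed

lemma reverse_left_mismatch:
  "w \<le> N \<Longrightarrow> Rev.left_mismatch (N - w) \<longleftrightarrow> right_mismatch w"
proof -
  assume w: "w \<le> N"
  show ?thesis
  proof (cases "w + 2 \<le> N")
    case True
    then have "N - w - 1 = N - Suc w" "N - w - 2 = N - (w + 2)" by auto
    then show ?thesis
      using True unfolding Rev.left_mismatch_def right_mismatch_def unfolding reverse_path_def by auto
  next
    case False then show ?thesis using w unfolding Rev.left_mismatch_def right_mismatch_def by auto
  qed
qed

lemma reverse_right_mismatch:
  "w \<le> N \<Longrightarrow> Rev.right_mismatch (N - w) \<longleftrightarrow> left_mismatch w"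
proof -
  assume w: "w \<le> N"
  show ?thesis
  proof (cases "2 \<le> w")
    case True
    then have "N - w + 2 = N - (w - 2)" "Suc (N - w) = N - (w - 1)" using w by auto
    moreover have "N - (N - w) = w" "N - (w - 1) \<le> N" using w by auto
    ultimately show ?thesis
      using True w unfolding Rev.right_mismatch_def left_mismatch_def unfolding reverse_path_def by auto
  next
    case False then show ?thesis using w unfolding Rev.right_mismatch_def left_mismatch_def by auto
  qed
qed

lemma reverse_orient: "extremum w \<Longrightarrow> Rev.orient (N - w) = orient w"
proof -
  assume e: "extremum w"
  then have "N - w - 1 = N - Suc w" "w < N" unfolding extremum_def by auto
  then show ?thesis using e unfolding Rev.orient_def orient_def extremum_def
    unfolding reverse_path_def by auto
qed

lemma reverse_peak_path:
  "extremum w \<Longrightarrow> Rev.peak_path (N - w) = reverse_path (peak_path w) N"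
  unfolding Rev.peak_path_def peak_path_def using reverse_orient unfolding reverse_path_def by auto

lemma reverse_valley_path:
  "extremum w \<Longrightarrow> Rev.valley_path (N - w) = reverse_path (valley_path w) N"
  unfolding Rev.valley_path_def valley_path_def using reverse_orient unfolding reverse_path_def by auto

lemma reverse_peak_level: "extremum w \<Longrightarrow> Rev.peak_level (N - w) = peak_level w"
proof -
  assume e: "extremum w"
  then have "N - w - 1 = N - Suc w" "w < N" unfolding extremum_def by auto
  then show ?thesis unfolding Rev.peak_level_def peak_level_def reverse_peak_path[OF e]
    using e unfolding extremum_def reverse_path_def peak_path_def by auto
qed

lemma left_run_reverse: "w < N \<Longrightarrow> left_run (reverse_path P N) (N - w) = right_run P N w"
  using right_run_eq_left_run_reverse by simp

lemma right_run_reverse: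
  "0 < w \<Longrightarrow> w \<le> N \<Longrightarrow> right_run (reverse_path P N) N (N - w) = left_run P w"
proof -
  assume w: "0 < w" "w \<le> N"
  have "right_run (reverse_path P N) N (N - w) = left_run (reverse_path (reverse_path P N) N) (N - (N - w))"
    using right_run_eq_left_run_reverse[of "N - w" N "reverse_path P N"] w by auto
  also have "\<dots> = left_run (reverse_path (reverse_path P N) N) w" using w by simp
  also have "\<dots> = left_run P w" unfolding left_run_def
    by (subst run_start_cong[of "w - 1"
      "reverse_path (reverse_path P N) N" P]) (use w in \<open>auto simp: reverse_path_def\<close>)
  finally show ?thesis .
qed

lemma reverse_allowed:
  "w \<le> N \<Longrightarrow> N - w \<in> Rev.allowed \<longleftrightarrow> w \<in> allowed"
  unfolding Rev.allowed_def allowed_def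
    using reverse_extremum reverse_left_mismatch reverse_right_mismatch by auto

lemma reverse_deficient:
  "w \<le> N \<Longrightarrow> N - w \<in> Rev.deficient \<longleftrightarrow> w \<in> deficient"
proof -
  assume w: "w \<le> N"
  show ?thesis
  proof (cases "extremum w")
    case True
    then show ?thesis unfolding Rev.deficient_def deficient_def
      using reverse_allowed[OF w] reverse_peak_level[OF True] reverse_left_mismatch[OF w] reverse_right_mismatch[OF w] by auto
  next
    case False
    then show ?thesis
      using reverse_allowed[OF w] unfolding Rev.deficient_def deficient_def allowed_def by auto
  qed
qed

lemma reverse_deficient_run:
  "w \<in> deficient \<Longrightarrow> Rev.deficient_run (N - w) = deficient_run w"
proof -
  assume b: "w \<in> deficient"
  then have e: "extremum w" and x: "left_mismatch w \<noteq> right_mismatch w"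
    unfolding deficient_def allowed_def by auto
  have w: "0 < w" "w < N" using e unfolding extremum_def by auto
  show ?thesis unfolding Rev.deficient_run_def deficient_run_def reverse_left_mismatch[OF less_imp_le[OF w(2)]] reverse_valley_path[OF e]
    left_run_reverse[OF w(2)] right_run_reverse[OF w(1) less_imp_le[OF w(2)]] using x by auto
qed

lemma partner_right:
  assumes v: "v \<in> deficient" "right_mismatch v"
  shows "partner v \<in> allowed" "v < partner v" "left_mismatch (partner v)"
    "peak_path (partner v) = valley_path v" "valley_path (partner v) = peak_path v"
    "0 \<le> peak_level (partner v)" "- peak_level v \<le> peak_level (partner v)"
      "left_run (peak_path (partner v)) (partner v) = 0"
    "right_run (peak_path (partner v)) N (partner v) + 1 \<le> deficient_run v"
    "partner v + 1 \<le> N" "v + 2 \<le> partner v"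
      "peak_path v (Suc (partner v)) = peak_path v (partner v) + 1"
    "\<And>t. v \<le> t \<Longrightarrow> t < partner v \<Longrightarrow> peak_path v (Suc t) = peak_path v t - 1"
    "peak_level (partner v) = int (partner v - v) - peak_level v - 2" "orient (partner v) = - orient v"
proof -
  have e: "extremum v" and nl: "\<not> left_mismatch v"
    using v unfolding deficient_def allowed_def by auto
  have vN: "0 < v" "v < N" using e unfolding extremum_def by auto
  have vR: "N - v \<in> Rev.deficient" "Rev.left_mismatch (N - v)"
    using reverse_deficient[of v] reverse_left_mismatch[of v] v vN by auto
  note RP = Rev.partner_left[OF vR]
  define u' where "u' = Rev.partner (N - v)"
  have u'N: "u' + 2 \<le> N - v" "1 \<le> u'" using RP unfolding u'_def by auto
  have ptv: "partner v = N - u'"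
  proof -
    have "Rev.partner (N - v) = left_partner (reverse_path (peak_path v) N) (N - v)"
      unfolding Rev.partner_def using vR reverse_peak_path[OF e] by simp
    then show ?thesis unfolding partner_def right_partner_def u'_def using nl by simp
  qed
  have u'eq: "u' = N - partner v" using ptv u'N by auto
  have ptN: "partner v \<le> N" using ptv by auto
  have AAu: "partner v \<in> allowed"
    using RP(1) reverse_allowed[OF ptN] unfolding u'_def[symmetric] u'eq by simp
  then have eu: "extremum (partner v)" unfolding allowed_def by auto
  show "partner v \<in> allowed" by (rule AAu)
  show "v < partner v" "partner v + 1 \<le> N" "v + 2 \<le> partner v" using u'N ptv by auto
  show "left_mismatch (partner v)"
    using RP(3) reverse_right_mismatch[OF ptN] unfolding u'_def[symmetric] u'eq by simp
  have sgu: "orient (partner v) = - orient v"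
    using RP(15) reverse_orient[OF eu] reverse_orient[OF e] unfolding u'_def[symmetric] u'eq by simp
  show "orient (partner v) = - orient v" by (rule sgu)
  show "peak_path (partner v) = valley_path v" "valley_path (partner v) = peak_path v"
    unfolding peak_path_def valley_path_def using sgu by auto
  have hhu: "Rev.peak_level u' = peak_level (partner v)" using reverse_peak_level[OF eu] unfolding u'eq .
  show "0 \<le> peak_level (partner v)" "- peak_level v \<le> peak_level (partner v)"
    using RP(6,7) hhu reverse_peak_level[OF e] unfolding u'_def[symmetric] by auto
  show "peak_level (partner v) = int (partner v - v) - peak_level v - 2"
  proof -
    have "Rev.peak_level u' = int (N - v - u') - Rev.peak_level (N - v) - 2"
      using RP(14) unfolding u'_def .
    moreover have "N - v - u' = partner v - v" using ptv u'N by auto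
    ultimately show ?thesis using hhu reverse_peak_level[OF e] by simp
  qed
  have ptv0: "0 < partner v" "partner v < N" using eu unfolding extremum_def by auto
  show "left_run (peak_path (partner v)) (partner v) = 0"
    using RP(8) reverse_peak_path[OF eu] right_run_reverse[OF ptv0(1) less_imp_le[OF ptv0(2)]]
      unfolding u'_def[symmetric] u'eq by simp
  show "right_run (peak_path (partner v)) N (partner v) + 1 \<le> deficient_run v"
    using RP(9) reverse_peak_path[OF eu] left_run_reverse[OF ptv0(2)] reverse_deficient_run[OF v(1)]
      unfolding u'_def[symmetric] u'eq by simp
  show "peak_path v (Suc (partner v)) = peak_path v (partner v) + 1"
  proof -
    have "Rev.peak_path (N - v) (u' - 1) = Rev.peak_path (N - v) u' + 1" using RP(12) unfolding u'_def .
    moreover have "u' - 1 = N - Suc (partner v)" using ptv u'N by auto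
    ultimately have "Rev.peak_path (N - v) (N - Suc (partner v)) = Rev.peak_path (N - v) (N - partner v) + 1" using u'eq by simp
    then have "reverse_path (peak_path v) N (N - Suc (partner v)) = reverse_path (peak_path v) N (N - partner v) + 1" by (simp only: reverse_peak_path[OF e])
    then show ?thesis using ptv0 by (simp add: reverse_path_def)
  qed
  fix t assume t: "v \<le> t" "t < partner v"
  have "Rev.peak_path (N - v) (Suc (N - Suc t)) = Rev.peak_path (N - v) (N - Suc t) + 1"
    using RP(13)[of "N - Suc t"] t ptv u'N unfolding u'_def[symmetric] by auto
  moreover have "Suc (N - Suc t) = N - t" using t ptv0 by auto
  ultimately have "Rev.peak_path (N - v) (N - t) = Rev.peak_path (N - v) (N - Suc t) + 1" by simp
  then have "reverse_path (peak_path v) N (N - t) = reverse_path (peak_path v) N (N - Suc t) + 1"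
    by (simp only: reverse_peak_path[OF e])
  then show "peak_path v (Suc t) = peak_path v t - 1" using t ptv0 by (simp add: reverse_path_def)
qed

lemma partner_left_inj:
  assumes v: "v1 \<in> deficient" "left_mismatch v1" "v2 \<in> deficient" "left_mismatch v2"
    "partner v1 = partner v2"
  shows "v1 = v2"
proof (rule ccontr)
  assume ne: "v1 \<noteq> v2"
  have orient: "orient v1 = orient v2"
    using partner_left(15)[OF v(1,2)] partner_left(15)[OF v(3,4)] v(5) by simp
  then have PPe: "peak_path v1 = peak_path v2" unfolding peak_path_def by simp
  have e1: "extremum v1" and e2: "extremum v2" using v unfolding deficient_def allowed_def by auto
  have pk: "peak_path v1 (Suc v1) = peak_path v1 v1 - 1" "peak_path v2 (Suc v2) = peak_path v2 v2 - 1"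
    using extremum_values[OF e1] extremum_values[OF e2] by auto
  show False
  proof (cases "v1 < v2")
    case True
    have "peak_path v2 (Suc v1) = peak_path v2 v1 + 1"
      using partner_left(13)[OF v(3,4), of v1] partner_left(2,13)[OF v(1,2)] True v(5) partner_left(11)[OF v(1,2)] by auto
    then show False using pk PPe by auto
  next
    case False
    then have "v2 < v1" using ne by auto
    have "peak_path v1 (Suc v2) = peak_path v1 v2 + 1"
      using partner_left(13)[OF v(1,2), of v2] \<open>v2 < v1\<close> v(5) partner_left(11)[OF v(3,4)] by auto
    then show False using pk PPe by auto
  qed
qed

lemma partner_right_inj:
  assumes v: "v1 \<in> deficient" "right_mismatch v1" "v2 \<in> deficient" "right_mismatch v2"
    "partner v1 = partner v2"
  shows "v1 = v2"
proof (rule ccontr)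
  assume ne: "v1 \<noteq> v2"
  have orient: "orient v1 = orient v2"
    using partner_right(15)[OF v(1,2)] partner_right(15)[OF v(3,4)] v(5) by simp
  then have PPe: "peak_path v1 = peak_path v2" unfolding peak_path_def by simp
  have e1: "extremum v1" and e2: "extremum v2" using v unfolding deficient_def allowed_def by auto
  have vl: "peak_path v1 v1 = peak_path v1 (v1 - 1) + 1" "peak_path v2 v2 = peak_path v2 (v2 - 1) + 1"
    using extremum_values[OF e1] extremum_values[OF e2] by auto
  have p1: "0 < v1" "0 < v2" using e1 e2 unfolding extremum_def by auto
  show False
  proof (cases "v1 < v2")
    case True
    have "peak_path v1 (Suc (v2 - 1)) = peak_path v1 (v2 - 1) - 1"
      using partner_right(13)[OF v(1,2), of "v2 - 1"] True partner_right(11)[OF v(3,4)] v(5) by auto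
    then show False using vl PPe p1 by auto
  next
    case False
    then have "v2 < v1" using ne by auto
    have "peak_path v2 (Suc (v1 - 1)) = peak_path v2 (v1 - 1) - 1"
      using partner_right(13)[OF v(3,4), of "v1 - 1"] \<open>v2 < v1\<close> partner_right(11)[OF v(1,2)] v(5) by auto
    then show False using vl PPe p1 by auto
  qed
qed

lemma partner_left_mutual_shape:
  assumes v: "v \<in> deficient" "left_mismatch v" "partner v \<in> deficient"
  shows "peak_level v = 0" "peak_level (partner v) = 0" "partner v + 2 = v"
    "\<not> left_mismatch (partner v)"
proof -
  note PL = partner_left[OF v(1,2)]
  have "peak_level v \<le> 0" "peak_level (partner v) \<le> 0"
    using v unfolding deficient_def by auto
  then show "peak_level v = 0" "peak_level (partner v) = 0" using PL(6,7) by auto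
  then show "partner v + 2 = v" using PL(11,14) by auto
  show "\<not> left_mismatch (partner v)" using v(3) PL(3) unfolding deficient_def by auto
qed

lemma partner_left_involutive:
  assumes v: "v \<in> deficient" "left_mismatch v" "partner v \<in> deficient"
  shows "partner (partner v) = v"
proof -
  define u where "u = partner v"
  have e: "extremum v" using v unfolding deficient_def allowed_def by auto
  note PL = partner_left[OF v(1,2), folded u_def]
  note shape = partner_left_mutual_shape[OF v, folded u_def]
  have "right_partner (valley_path v) N u = v"
  proof (rule right_partner_eq)
    show "v + 1 \<le> N" "u + 2 \<le> v" using e shape unfolding extremum_def by auto
    show "valley_path v (Suc v) = valley_path v v + 1" using extremum_values[OF e] by auto
    fix t assume "u \<le> t" "t < v"
    then show "valley_path v (Suc t) = valley_path v t - 1"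
      using PL(13)[of t] by (auto simp: valley_path_eq)
  qed
  moreover have "partner u = right_partner (peak_path u) N u" unfolding partner_def using shape by simp
  ultimately show ?thesis using PL(4) unfolding u_def by simp
qed

lemma partner_left_mutual_gain:
  assumes v: "v \<in> deficient" "left_mismatch v" "partner v \<in> deficient"
  shows "flip_gain v + flip_gain (partner v) + 2 * drift a n \<le> 0"
proof -
  define u where "u = partner v"
  define P where "P = peak_path v"
  define Q where "Q = valley_path v"
  have e: "extremum v" and h: "peak_level v \<le> 0" and nr: "\<not> right_mismatch v"
    using v unfolding deficient_def allowed_def by auto
  have ub: "u \<in> deficient" using v unfolding u_def by simp
  have eu: "extremum u" and hu: "peak_level u \<le> 0"
    using ub unfolding deficient_def allowed_def by auto
  note PL = partner_left[OF v(1,2), folded u_def]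
  note shape = partner_left_mutual_shape[OF v, folded u_def]
  have PPu: "peak_path u = Q" "valley_path u = P" using PL(4,5) unfolding P_def Q_def by auto
  define x where "x = left_run Q v"
  define r where "r = right_run P N v"
  define l' where "l' = left_run Q u"
  define r' where "r' = right_run P N u"
  have x: "x = deficient_run v" "1 \<le> x" "x + 1 \<le> n"
    using flip_gain_deficient[OF v(1)] v(2) unfolding x_def deficient_run_def Q_def by auto
  have bnd: "left_run P' w + right_run Q' N w + 1 \<le> n" if "extremum w" for P' Q' w
    using runs_bound[of w N n P' Q'] that Nn unfolding extremum_def by auto
  have "r \<le> r'"
  proof -
    have "P (v - 1) = 0" "P (Suc v) = 0" "P v = 0 + 1"
      using extremum_values[OF e] shape unfolding P_def by auto
    then have "run_end P N (v - 1) = run_end P N (Suc v)"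
      using e by (intro run_end_across_peak) (auto simp: extremum_def)
    moreover have "Suc u = v - 1" using shape by auto
    moreover have "Suc v \<le> run_end P N (Suc v)" using run_end_props(1)[of "Suc v" N P] e
      unfolding extremum_def by auto
    ultimately show ?thesis unfolding r'_def r_def right_run_def by (simp add: div_le_mono)
  qed
  have Dv: "flip_gain v \<le> - weight_incr a r + weight_incr a x"
  proof -
    have "left_run P v = 0" using left_run_peak_pos[OF e] shape v(2) unfolding P_def by auto
    then have "split_gain a (left_run P v) (right_run P N v) \<le> - weight_incr a r"
      using split_gain_degenerate_le(1)[of "left_run P v" "right_run P N v"] bnd[OF e, of P P]
      unfolding r_def by auto
    moreover have "right_run Q N v = 0" using right_run_valley_pos[OF e h] nr unfolding Q_def by auto
    then have "- split_gain a (left_run Q v) (right_run Q N v) = weight_incr a x"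
      using x unfolding x_def split_gain_def dyck_weight0_def weight_incr_def by auto
    ultimately show ?thesis unfolding flip_gain_def P_def[symmetric] Q_def[symmetric] using shape by auto
  qed
  have Du: "flip_gain u \<le> - weight_incr a l' + weight_incr a r'"
  proof -
    have "right_run Q N u = 0" using PL(8) PPu by simp
    then have "split_gain a (left_run Q u) (right_run Q N u) \<le> - weight_incr a l'"
      using split_gain_degenerate_le(1)[of "left_run Q u" "right_run Q N u"] bnd[OF eu, of Q Q]
      unfolding l'_def by auto
    moreover have "left_run P u = 0" "1 \<le> r'"
      using left_run_valley_pos[OF eu hu] right_run_valley_pos[OF eu hu] shape ub PL(3) PPu
      unfolding r'_def by auto
    then have "- split_gain a (left_run P u) (right_run P N u) = weight_incr a r'"
      unfolding r'_def split_gain_def dyck_weight0_def weight_incr_def by auto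
    ultimately show ?thesis unfolding flip_gain_def PPu using shape by auto
  qed
  have "weight_incr a (x - 1) \<le> weight_incr a l'"
    using PL(9) PPu x(1) unfolding l'_def by (intro weight_incr_antimono[OF a]) auto
  then show ?thesis
    using Dv Du weight_incr_antimono[OF a \<open>r \<le> r'\<close>] weight_incr_step_le_drift[OF a x(2,3)]
    unfolding u_def by auto
qed

lemma partner_right_mutual:
  assumes v: "v \<in> deficient" "right_mismatch v" "partner v \<in> deficient"
  shows "partner (partner v) = v" "left_mismatch (partner v)"
proof -
  define u where "u = partner v"
  have e: "extremum v" and nl: "\<not> left_mismatch v"
    using v unfolding deficient_def allowed_def by auto
  note PR = partner_right[OF v(1,2), folded u_def]
  have ub: "u \<in> deficient" using v unfolding u_def by simp
  show "left_mismatch (partner v)" using PR(3) unfolding u_def .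
  have nru: "\<not> right_mismatch u" using ub PR(3) unfolding deficient_def by auto
  have "left_partner (valley_path v) u = v"
  proof (rule left_partner_eq)
    show "1 \<le> v" "v + 2 \<le> u" using e PR(11) unfolding extremum_def by auto
    show "valley_path v (v - 1) = valley_path v v + 1" using extremum_values[OF e] by auto
    fix t assume "v \<le> t" "t < u"
    then show "valley_path v (Suc t) = valley_path v t + 1"
      using PR(13)[of t] by (auto simp: valley_path_eq)
  qed
  moreover have "partner u = left_partner (peak_path u) u" unfolding partner_def using PR(3) by simp
  ultimately show "partner (partner v) = v" using PR(4) unfolding u_def by simp
qed

lemma finite_allowed: "finite allowed"
  by (rule finite_subset[of _ "{..<N}"]) (auto simp: allowed_def extremum_def)

lemma partner_runs_le:
  assumes v: "v \<in> deficient"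
  defines "l \<equiv> left_run (peak_path (partner v)) (partner v)"
    and "r \<equiv> right_run (peak_path (partner v)) N (partner v)"
  shows "l + r + 1 \<le> deficient_run v"
    "left_mismatch v \<Longrightarrow> r = 0" "right_mismatch v \<Longrightarrow> l = 0"
proof -
  have "left_mismatch v \<or> right_mismatch v" using v unfolding deficient_def by auto
  then show "l + r + 1 \<le> deficient_run v"
    using partner_left(8,9)[OF v] partner_right(8,9)[OF v] unfolding l_def r_def by auto
  show "left_mismatch v \<Longrightarrow> r = 0" using partner_left(8)[OF v] unfolding r_def by auto
  show "right_mismatch v \<Longrightarrow> l = 0" using partner_right(8)[OF v] unfolding l_def by auto
qed

lemma flip_gain_nonneg_level:
  assumes q: "q \<in> allowed" "q \<notin> deficient" and hq: "0 \<le> peak_level q"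
  defines "m \<equiv> left_run (peak_path q) q + right_run (peak_path q) N q"
  shows "flip_gain q \<le> dyck_weight0 a m - dyck_weight a (m + 1)"
proof -
  have e: "extremum q" and lr: "left_mismatch q \<or> right_mismatch q"
    using q unfolding allowed_def by auto
  have "left_run (peak_path q) q = 0 \<or> right_run (peak_path q) N q = 0"
    using lr left_run_peak_pos[OF e hq] right_run_peak_pos[OF e hq] by auto
  then have "split_gain a (left_run (peak_path q) q) (right_run (peak_path q) N q)
      = dyck_weight0 a m - dyck_weight a (m + 1)"
    using split_gain_degenerate unfolding m_def by simp
  moreover have "- split_gain a (left_run (valley_path q) q) (right_run (valley_path q) N q) \<le> 0"
    if h: "peak_level q \<le> 0"
    using valley_gain_both_mismatches[OF e h] q lr h drift_nonneg[OF a, of n] allowed_imp_n_ge_2[OF q(1)]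
    unfolding deficient_def by auto
  ultimately show ?thesis using hq unfolding flip_gain_def by auto
qed

lemma partner_fiber_le:
  assumes q: "q \<in> allowed" "q \<notin> deficient"
  shows "flip_gain q + drift a n
    + (\<Sum>v\<in>{v \<in> deficient. partner v \<notin> deficient \<and> partner v = q}. flip_gain v + drift a n) \<le> 0"
proof -
  define K where "K = {v \<in> deficient. partner v \<notin> deficient \<and> partner v = q}"
  define KL where "KL = {v \<in> K. left_mismatch v}"
  define KR where "KR = {v \<in> K. right_mismatch v}"
  define m where "m = left_run (peak_path q) q + right_run (peak_path q) N q"
  have finK: "finite K" "finite KL" "finite KR"
    using finite_allowed unfolding K_def KL_def KR_def deficient_def by auto
  have Kun: "K = KL \<union> KR" "KL \<inter> KR = {}"
    unfolding K_def KL_def KR_def deficient_def by auto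
  have cKL: "card KL \<le> 1"
    unfolding One_nat_def card_le_Suc0_iff_eq[OF finK(2)]
      using partner_left_inj by (auto simp: KL_def K_def)
  have cKR: "card KR \<le> 1"
    unfolding One_nat_def card_le_Suc0_iff_eq[OF finK(3)]
      using partner_right_inj by (auto simp: KR_def K_def)
  have n2: "2 \<le> n" using allowed_imp_n_ge_2 q by auto
  show ?thesis
  proof (cases "K = {}")
    case True
    then have E: "{v \<in> deficient. partner v \<notin> deficient \<and> partner v = q} = {}"
      unfolding K_def .
    show ?thesis unfolding E using flip_gain_nondeficient[OF q] by simp
  next
    case False
    then obtain v0 where v0K: "v0 \<in> K" by auto
    then have v0: "v0 \<in> deficient" "partner v0 = q" unfolding K_def by auto
    then have hq: "0 \<le> peak_level q"
      using partner_left(6)[of v0] partner_right(6)[of v0] unfolding deficient_def by auto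
    have Kf: "flip_gain v \<le> weight_incr a (m + 1) \<and> m + 2 \<le> n" if "v \<in> K" for v
    proof -
      have v: "v \<in> deficient" "partner v = q" using that unfolding K_def by auto
      then have "m + 1 \<le> deficient_run v" using partner_runs_le(1)[OF v(1)] unfolding m_def by simp
      then show ?thesis
        using flip_gain_deficient[OF v(1)] weight_incr_antimono[OF a, of "m + 1" "deficient_run v"]
        by auto
    qed
    have m2: "m + 2 \<le> n" using Kf[OF v0K] by simp
    have Dq: "flip_gain q \<le> dyck_weight0 a m - dyck_weight a (m + 1)"
      using flip_gain_nonneg_level[OF q hq] unfolding m_def .
    have sK: "(\<Sum>v\<in>K. flip_gain v + drift a n) \<le> real (card K) * (weight_incr a (m + 1) + drift a n)"
      using sum_bounded_above[of K "\<lambda>v. flip_gain v + drift a n"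
        "weight_incr a (m + 1) + drift a n"] Kf
      by auto
    have cK: "card K = card KL + card KR" using card_Un_disjoint[OF finK(2,3) Kun(2)] Kun(1) by simp
    consider "card K = 1" | "card K = 2"
      using cK cKL cKR False finK(1) by (cases "card KL"; cases "card KR") auto
    then show ?thesis
    proof cases
      case 1
      have "weight_incr a (m + 1) - weight_incr a m + 2 * drift a n \<le> 0"
        using weight_incr_step_le_drift[OF a, of "m + 1" n] m2 by simp
      moreover have "dyck_weight0 a m - dyck_weight a (m + 1) \<le> - weight_incr a m"
        using dyck_weight0_le[of a m] a by simp
      ultimately show ?thesis using 1 Dq sK unfolding K_def[symmetric] by auto
    next
      case 2
      text \<open>Partners of q from both sides force both runs next to q to be empty.\<close>
      then obtain v1 v2 where "v1 \<in> KL" "v2 \<in> KR" using cK cKL cKR by fastforce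
      then have "v1 \<in> deficient" "left_mismatch v1" "partner v1 = q"
        "v2 \<in> deficient" "right_mismatch v2" "partner v2 = q"
        unfolding KL_def KR_def K_def by auto
      then have "m = 0"
        using partner_runs_le(2)[of v1] partner_runs_le(3)[of v2] unfolding m_def by auto
      then have "flip_gain q \<le> - dyck_weight a 1" using Dq by (simp add: dyck_weight0_def)
      moreover have "weight_incr a 1 = dyck_weight a 2 - dyck_weight a 1"
        unfolding weight_incr_def by (simp add: numeral_2_eq_2)
      ultimately show ?thesis
        using sK 2 weight_2_drift_bound[OF a n2] \<open>m = 0\<close> unfolding K_def[symmetric] by auto
    qed
  qed
qed

lemma mutual_partners_gain_sum_le:
  "(\<Sum>v\<in>{v \<in> deficient. partner v \<in> deficient}. flip_gain v + drift a n) \<le> 0"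
proof -
  define g where "g = (\<lambda>v. flip_gain v + drift a n)"
  define Bm where "Bm = {v \<in> deficient. partner v \<in> deficient}"
  have invol: "partner (partner v) = v" if "v \<in> Bm" for v
  proof -
    have "v \<in> deficient" "partner v \<in> deficient" using that unfolding Bm_def by auto
    moreover have "left_mismatch v \<or> right_mismatch v"
      using that unfolding Bm_def deficient_def allowed_def by auto
    ultimately show ?thesis using partner_left_involutive partner_right_mutual(1) by blast
  qed
  have pair: "g v + g (partner v) \<le> 0" if "v \<in> Bm" for v
  proof -
    have vb: "v \<in> deficient" "partner v \<in> deficient" using that unfolding Bm_def by auto
    show ?thesis
    proof (cases "left_mismatch v")
      case True
      then show ?thesis using partner_left_mutual_gain[OF vb(1) True vb(2)] unfolding g_def by auto
    next
      case False
      then have rm: "right_mismatch v" using vb unfolding deficient_def allowed_def by auto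
      have lmu: "left_mismatch (partner v)" and pp: "partner (partner v) = v"
        using partner_right_mutual[OF vb(1) rm vb(2)] by auto
      have "partner (partner v) \<in> deficient" using pp vb by simp
      then show ?thesis using partner_left_mutual_gain[OF vb(2) lmu] pp unfolding g_def by auto
    qed
  qed
  have bij: "bij_betw partner Bm Bm"
  proof (rule bij_betw_byWitness[of _ partner])
    show "\<forall>v\<in>Bm. partner (partner v) = v" "\<forall>v\<in>Bm. partner (partner v) = v"
      using invol by auto
    show "partner ` Bm \<subseteq> Bm" "partner ` Bm \<subseteq> Bm"
      using invol unfolding Bm_def by auto
  qed
  have "sum (g \<circ> partner) Bm = sum g Bm"
    using sum.reindex_bij_betw[OF bij, of g] by (simp add: comp_def)
  then have "2 * sum g Bm = (\<Sum>v\<in>Bm. g v + g (partner v))" by (simp add: sum.distrib comp_def)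
  also have "\<dots> \<le> 0" using pair by (intro sum_nonpos) auto
  finally show ?thesis by (simp add: g_def Bm_def)
qed

lemma allowed_gain_sum_le: "(\<Sum>v\<in>allowed. flip_gain v + drift a n) \<le> 0"
proof -
  define g where "g = (\<lambda>v. flip_gain v + drift a n)"
  define Bm where "Bm = {v \<in> deficient. partner v \<in> deficient}"
  define Bn where "Bn = {v \<in> deficient. partner v \<notin> deficient}"
  define A0 where "A0 = allowed - deficient"
  have finAA: "finite allowed" by (rule finite_allowed)
  have BA: "deficient \<subseteq> allowed" unfolding deficient_def by auto
  have fin: "finite deficient" "finite Bm" "finite Bn" "finite A0"
    using finAA BA unfolding Bm_def Bn_def A0_def by (auto intro: finite_subset)
  have s1: "sum g allowed = sum g A0 + sum g deficient"
    using sum.subset_diff[OF BA finAA, of g] unfolding A0_def by simp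
  have s2: "sum g deficient = sum g Bm + sum g Bn"
  proof -
    have "deficient = Bm \<union> Bn" "Bm \<inter> Bn = {}" unfolding Bm_def Bn_def by auto
    then show ?thesis using sum.union_disjoint[OF fin(2,3)] by simp
  qed
  have ptAA: "partner v \<in> allowed" if "v \<in> deficient" for v
    using partner_left(1)[OF that] partner_right(1)[OF that] that unfolding deficient_def by auto
  have s3: "sum g Bn = (\<Sum>q\<in>A0. sum g {v \<in> Bn. partner v = q})"
  proof -
    have "partner ` Bn \<subseteq> A0" using ptAA unfolding Bn_def A0_def by auto
    then show ?thesis using sum.group[OF fin(3) fin(4), of partner g] by simp
  qed
  have s4: "sum g A0 + sum g Bn \<le> 0"
  proof -
    have "sum g A0 + sum g Bn = (\<Sum>q\<in>A0. g q + sum g {v \<in> Bn. partner v = q})"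
      using s3 by (simp add: sum.distrib)
    also have "\<dots> \<le> (\<Sum>q\<in>A0. 0)"
    proof (rule sum_mono)
      fix q assume q: "q \<in> A0"
      have "{v \<in> Bn. partner v = q} = {v \<in> deficient. partner v \<notin> deficient \<and> partner v = q}" unfolding Bn_def by auto
      then show "g q + sum g {v \<in> Bn. partner v = q} \<le> 0"
        using partner_fiber_le[of q] q unfolding A0_def g_def by auto
    qed
    finally show ?thesis by simp
  qed
  have s5: "sum g Bm \<le> 0" using mutual_partners_gain_sum_le unfolding g_def Bm_def .
  show ?thesis using s1 s2 s4 s5 unfolding g_def[symmetric] by linarith
qed


lemma average_flip_gain_le:
  assumes "allowed \<noteq> {}"
  shows "(\<Sum>v\<in>allowed. flip_gain v) / card allowed \<le> - drift a n"
proof -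
  have "(\<Sum>v\<in>allowed. flip_gain v) + card allowed * drift a n \<le> 0"
    using allowed_gain_sum_le by (simp add: sum.distrib)
  moreover have "0 < real (card allowed)" using finite_allowed assms by (auto simp: card_gt_0_iff)
  ultimately show ?thesis by (simp add: divide_le_eq algebra_simps)
qed
end



definition phi_path :: "real \<Rightarrow> path \<Rightarrow> nat \<Rightarrow> real" where
  "phi_path a P N = dyck_sum a P N + dyck_sum a (\<lambda>t. - P t) N"

context balanced_path begin

lemma phi_path_flip:
  assumes e: "extremum v"
  shows "phi_path a (H(v := 2 * H (v - 1) - H v)) N - phi_path a H N = flip_gain v"
proof -
  define P where "P = peak_path v"
  define Q where "Q = valley_path v"
  define h where "h = peak_level v"
  have vN: "0 < v" "v < N" using e unfolding extremum_def by auto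
  have Pp: "lattice_path P N" "P 0 = 0" "P N = 0" using peak_path_balanced[OF e] unfolding P_def by auto
  have Qp: "lattice_path Q N" "Q 0 = 0" "Q N = 0"
    using valley_path_balanced[OF e] unfolding Q_def by auto
  have Pv: "P (v - 1) = h" "P (Suc v) = h" "P v = h + 1"
    using extremum_values[OF e] unfolding P_def h_def by auto
  have Qv: "Q (v - 1) = - h" "Q (Suc v) = - h" "Q v = - h - 1"
    using extremum_values[OF e] unfolding Q_def h_def by auto
  have LPr: "dyck_sum a (P(v := h - 1)) N - dyck_sum a P N = (if 0 \<le> h then split_gain a (left_run P v) (right_run P N v) else 0)"
    by (rule dyck_sum_lower_peak[OF Pp vN Pv])
  have RVr: "dyck_sum a (Q(v := - h + 1)) N - dyck_sum a Q N = (if 0 \<le> - h then - split_gain a (left_run Q v) (right_run Q N v) else 0)"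
    by (rule dyck_sum_raise_valley[OF Qp vN Qv(1,2)]) (use Qv in simp)
  have D: "flip_gain v = (dyck_sum a (P(v := h - 1)) N - dyck_sum a P N) + (dyck_sum a (Q(v := - h + 1)) N - dyck_sum a Q N)"
    unfolding LPr RVr flip_gain_def P_def[symmetric] Q_def[symmetric] h_def[symmetric] by auto
  show ?thesis
  proof (cases "orient v = 1")
    case True
    have PH: "P = H" unfolding P_def peak_path_def True by simp
    have QH: "Q = (\<lambda>t. - H t)" unfolding Q_def valley_path_def True by simp
    have H1: "H(v := 2 * H (v - 1) - H v) = P(v := h - 1)" using Pv unfolding PH by auto
    have H2: "(\<lambda>t. - (P(v := h - 1)) t) = Q(v := - h + 1)" unfolding QH PH by auto
    show ?thesis unfolding phi_path_def H1 H2 D using PH QH by simp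
  next
    case False
    then have sgm: "orient v = -1" using orient_cases[OF e] by auto
    have PH: "P = (\<lambda>t. - H t)" unfolding P_def peak_path_def sgm by simp
    have QH: "Q = H" unfolding Q_def valley_path_def sgm by simp
    have H1: "H(v := 2 * H (v - 1) - H v) = Q(v := - h + 1)" using Qv unfolding QH by auto
    have H2: "(\<lambda>t. - (Q(v := - h + 1)) t) = P(v := h - 1)" unfolding QH PH by auto
    show ?thesis unfolding phi_path_def H1 H2 D using PH QH by simp
  qed
qed

end

section \<open>Words and their height paths\<close>

definition height :: "nat list \<Rightarrow> path" where
  "height w t = int (count_list (take t w) 1) - int (count_list (take t w) 2)"

definition letter_step :: "nat \<Rightarrow> int" where
  "letter_step x = (if x = 1 then 1 else if x = 2 then -1 else 0)"

lemma height_0[simp]: "height w 0 = 0" by (simp add: height_def)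

lemma height_Suc: "height w (Suc t) = height w t + (if t < length w then letter_step (w ! t) else 0)"
proof (cases "t < length w")
  case True
  then have "take (Suc t) w = take t w @ [w ! t]" by (simp add: take_Suc_conv_app_nth)
  then show ?thesis using True by (simp add: height_def letter_step_def)
next
  case False
  then show ?thesis by (simp add: height_def)
qed

lemma height_length: "count_list w 1 = count_list w 2 \<Longrightarrow> height w (length w) = 0"
  by (simp add: height_def)

lemma letter_step_cases: "x \<in> {1, 2} \<Longrightarrow> letter_step x = 1 \<or> letter_step x = -1"
  by (auto simp: letter_step_def)

lemma lattice_path_height:
  "set w \<subseteq> {1, 2} \<Longrightarrow> lattice_path (height w) (length w)"
  unfolding lattice_path_def
proof (intro allI impI)
  fix t assume s: "set w \<subseteq> {1, 2}" and t: "t < length w"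
  then have "w ! t \<in> {1, 2}" using nth_mem by blast
  then show "height w (Suc t) = height w t + 1 \<or> height w (Suc t) = height w t - 1"
    using height_Suc[of w t] t letter_step_cases by auto
qed

lemma count_list_take_drop:
  assumes "i \<le> k" "j + k \<le> length w"
  shows "count_list (take i (take k (drop j w))) x + count_list (take j w) x = count_list (take (j + i) w) x"
proof -
  have "take i (take k (drop j w)) = take i (drop j w)" using assms by (simp add: min_def)
  moreover have "take (j + i) w = take j w @ take i (drop j w)" by (rule take_add)
  ultimately show ?thesis by simp
qed

definition letter_excess :: "nat \<Rightarrow> nat \<Rightarrow> nat list \<Rightarrow> path" where
  "letter_excess x y w t = int (count_list (take t w) x) - int (count_list (take t w) y)"

lemma height_eq_letter_excess: "height w = letter_excess 1 2 w"
  and neg_height_eq_letter_excess: "(\<lambda>t. - height w t) = letter_excess 2 1 w"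
  by (auto simp: height_def letter_excess_def)

lemma letter_excess_diff:
  assumes "i \<le> k" "j + k \<le> length w"
  shows "int (count_list (take i (take k (drop j w))) x) - int (count_list (take i (take k (drop j w))) y)
         = letter_excess x y w (j + i) - letter_excess x y w j"
  using count_list_take_drop[OF assms, of x] count_list_take_drop[OF assms, of y]
  unfolding letter_excess_def by linarith

definition dyck_run :: "path \<Rightarrow> nat \<Rightarrow> nat \<Rightarrow> nat \<Rightarrow> bool" where
  "dyck_run P N j k \<longleftrightarrow> 0 < k \<and> j + k \<le> N \<and> P (j + k) = P j \<and>
     (\<forall>t. j \<le> t \<longrightarrow> t \<le> j + k \<longrightarrow> P j \<le> P t) \<and> 0 \<le> P j"

lemma dyck_run_letter_excess_iff:
  "dyck_run (letter_excess x y w) (length w) j k \<longleftrightarrow> 0 < k \<and> j + k \<le> length w \<and>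
     (let p = take j w; v = take k (drop j w) in
        count_list v x = count_list v y \<and>
        (\<forall>i\<in>{1..k}. count_list (take i v) x \<ge> count_list (take i v) y) \<and>
        count_list p x \<ge> count_list p y)"
proof -
  define v where "v = take k (drop j w)"
  define E where "E = letter_excess x y w"
  have diff: "int (count_list (take i v) x) - int (count_list (take i v) y) = E (j + i) - E j"
    if "i \<le> k" "j + k \<le> length w" for i
    using letter_excess_diff[OF that] unfolding v_def E_def .
  have "(\<forall>i\<in>{1..k}. count_list (take i v) y \<le> count_list (take i v) x)
      \<longleftrightarrow> (\<forall>t. j \<le> t \<longrightarrow> t \<le> j + k \<longrightarrow> E j \<le> E t)" if jk: "j + k \<le> length w"
  proof
    assume h: "\<forall>i\<in>{1..k}. count_list (take i v) y \<le> count_list (take i v) x"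
    show "\<forall>t. j \<le> t \<longrightarrow> t \<le> j + k \<longrightarrow> E j \<le> E t"
    proof (intro allI impI)
      fix t assume t: "j \<le> t" "t \<le> j + k"
      show "E j \<le> E t"
      proof (cases "t = j")
        case False
        then have "t - j \<in> {1..k}" using t by auto
        then have "count_list (take (t - j) v) y \<le> count_list (take (t - j) v) x" using h by blast
        moreover have "int (count_list (take (t - j) v) x) - int (count_list (take (t - j) v) y)
            = E t - E j"
          using diff[of "t - j"] t jk by simp
        ultimately show ?thesis by linarith
      qed simp
    qed
  next
    assume h: "\<forall>t. j \<le> t \<longrightarrow> t \<le> j + k \<longrightarrow> E j \<le> E t"
    show "\<forall>i\<in>{1..k}. count_list (take i v) y \<le> count_list (take i v) x"
    proof
      fix i assume i: "i \<in> {1..k}"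
      then have "E j \<le> E (j + i)" using h by auto
      then show "count_list (take i v) y \<le> count_list (take i v) x" using diff[of i] i jk by auto
    qed
  qed
  moreover have "j + k \<le> length w \<Longrightarrow> count_list v x = count_list v y \<longleftrightarrow> E (j + k) = E j"
    using diff[of k] by (auto simp: v_def)
  moreover have "count_list (take j w) y \<le> count_list (take j w) x \<longleftrightarrow> 0 \<le> E j"
    unfolding E_def letter_excess_def by auto
  ultimately show ?thesis unfolding dyck_run_def Let_def v_def[symmetric] E_def[symmetric] by auto
qed

lemma pos_dyck_iff: "pos_dyck w j k \<longleftrightarrow> dyck_run (height w) (length w) j k"
  unfolding pos_dyck_def height_eq_letter_excess dyck_run_letter_excess_iff ..

lemma neg_dyck_iff:
  "neg_dyck w j k \<longleftrightarrow> dyck_run (\<lambda>t. - height w t) (length w) j k"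
  unfolding neg_dyck_def neg_height_eq_letter_excess dyck_run_letter_excess_iff ..

lemma dyck_start_dyck_run:
  assumes st: "lattice_path P N" and PN: "P N = 0" and u: "dyck_start P N j"
  shows "dyck_run P N j (run_end P N j - j)"
proof -
  have j: "j < N" "0 \<le> P j" "P (Suc j) = P j + 1" using u unfolding dyck_start_def by auto
  note R = run_end_props[OF less_imp_le[OF j(1)], where P=P]
  have "run_end P N j \<noteq> j" using R(4) j by auto
  then have gt: "j < run_end P N j" using R(1) by auto
  show ?thesis unfolding dyck_run_def
    using gt R(2,3) run_end_level[OF st PN less_imp_le[OF j(1)] j(2)] j(2) by auto
qed

definition maximal_run :: "path \<Rightarrow> nat \<Rightarrow> nat \<Rightarrow> nat \<Rightarrow> bool" where
  "maximal_run P N j k \<longleftrightarrow> \<not> (\<exists>j' k'. (j', k') \<noteq> (j, k) \<and> j' \<le> j \<and> j + k \<le> j' + k' \<and> dyck_run P N j' k' \<and> P j' = P j)"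

lemma maximal_run_dyck_start:
  assumes st: "lattice_path P N" and P0: "P 0 = 0" and pd: "dyck_run P N j k"
    and m: "maximal_run P N j k"
  shows "dyck_start P N j"
proof -
  have k: "0 < k" "j + k \<le> N" "P (j + k) = P j"
    "\<And>t. j \<le> t \<Longrightarrow> t \<le> j + k \<Longrightarrow> P j \<le> P t" "0 \<le> P j"
    using pd unfolding dyck_run_def by auto
  have jN: "j < N" using k by auto
  have "P j \<le> P (Suc j)" using k(4)[of "Suc j"] k(1) by auto
  then have up: "P (Suc j) = P j + 1" using lattice_pathD[OF st jN] by auto
  have left: "j = 0 \<or> P (j - 1) = P j - 1"
  proof (rule ccontr)
    assume "\<not> (j = 0 \<or> P (j - 1) = P j - 1)"
    then have j0: "0 < j" and pj: "P (j - 1) \<noteq> P j - 1" by auto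
    have "P (Suc (j - 1)) = P (j - 1) + 1 \<or> P (Suc (j - 1)) = P (j - 1) - 1"
      using lattice_pathD[OF st, of "j - 1"] jN by auto
    then have pj1: "P (j - 1) = P j + 1" using j0 pj by auto
    define s where "s = run_start P j"
    note L = run_start_props[of P j, folded s_def]
    have Ps: "P s = P j" using run_start_level[OF st P0, of j] k(5) jN unfolding s_def by auto
    have sj: "s < j"
    proof (rule ccontr)
      assume "\<not> s < j"
      then have "s = j" using L(1) by auto
      then show False using L(3) j0 pj1 by auto
    qed
    have sk: "s + (j + k - s) = j + k" using sj by auto
    have allt: "P s \<le> P t" if "s \<le> t" "t \<le> s + (j + k - s)" for t
    proof (cases "t \<le> j")
      case True then show ?thesis using L(2)[of t] that Ps by auto
    next
      case False then show ?thesis using k(4)[of t] that sk Ps by auto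
    qed
    have "dyck_run P N s (j + k - s)"
      unfolding dyck_run_def using sj k Ps sk allt by auto
    then have "\<exists>j' k'. (j', k') \<noteq> (j, k) \<and> j' \<le> j \<and> j + k \<le> j' + k' \<and> dyck_run P N j' k' \<and> P j' = P j"
      using sj sk Ps by (intro exI[of _ s] exI[of _ "j + k - s"]) auto
    then show False using m unfolding maximal_run_def by blast
  qed
  show ?thesis unfolding dyck_start_def using jN k(5) up left by auto
qed

lemma maximal_run_length:
  assumes st: "lattice_path P N" and PN: "P N = 0" and pd: "dyck_run P N j k"
    and m: "maximal_run P N j k"
  shows "k = run_end P N j - j"
proof -
  have k: "0 < k" "j + k \<le> N" "P (j + k) = P j"
    "\<And>t. j \<le> t \<Longrightarrow> t \<le> j + k \<Longrightarrow> P j \<le> P t" "0 \<le> P j"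
    using pd unfolding dyck_run_def by auto
  define e where "e = run_end P N j"
  have jN: "j \<le> N" using k by auto
  note R = run_end_props[OF jN, where P=P, folded e_def]
  have ge: "j + k \<le> e"
  proof (rule ccontr)
    assume "\<not> j + k \<le> e"
    then have "e < N" "P (Suc e) < P j" "Suc e \<le> j + k" using R k by auto
    then show False using k(4)[of "Suc e"] R(1) by auto
  qed
  have "\<not> j + k < e"
  proof
    assume lt: "j + k < e"
    have "dyck_run P N j (e - j)" unfolding dyck_run_def
      using lt R run_end_level[OF st PN jN k(5)] k(5) unfolding e_def[symmetric]
      by auto
    then have "\<exists>j' k'. (j', k') \<noteq> (j, k) \<and> j' \<le> j \<and> j + k \<le> j' + k' \<and> dyck_run P N j' k' \<and> P j' = P j"
      using lt by (intro exI[of _ j] exI[of _ "e - j"]) auto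
    then show False using m unfolding maximal_run_def by blast
  qed
  then show ?thesis using ge unfolding e_def by auto
qed

lemma dyck_start_maximal_run:
  assumes pd: "dyck_run P N j k" and a: "dyck_start P N j \<and> k = run_end P N j - j"
  shows "maximal_run P N j k"
proof -
  have k: "0 < k" "j + k \<le> N" "P (j + k) = P j"
    "\<And>t. j \<le> t \<Longrightarrow> t \<le> j + k \<Longrightarrow> P j \<le> P t" "0 \<le> P j"
    using pd unfolding dyck_run_def by auto
  have u: "j < N" "P (Suc j) = P j + 1" "j = 0 \<or> P (j - 1) = P j - 1"
    using a unfolding dyck_start_def by auto
  show "maximal_run P N j k" unfolding maximal_run_def
  proof
    assume "\<exists>j' k'. (j', k') \<noteq> (j, k) \<and> j' \<le> j \<and> j + k \<le> j' + k' \<and> dyck_run P N j' k' \<and> P j' = P j"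
    then obtain j' k' where c: "(j', k') \<noteq> (j, k)" "j' \<le> j" "j + k \<le> j' + k'"
      "dyck_run P N j' k'" "P j' = P j" by blast
    have c2: "\<And>t. j' \<le> t \<Longrightarrow> t \<le> j' + k' \<Longrightarrow> P j' \<le> P t" "j' + k' \<le> N" using c(4) unfolding dyck_run_def by auto
    show False
    proof (cases "j' < j")
      case True
      then have "P j' \<le> P (j - 1)" using c2(1)[of "j - 1"] c(3) k(1) by auto
      then show False using u(3) True c(5) by auto
    next
      case False
      then have "j' = j" using c(2) by auto
      then have "k < k'" using c(1,3) by auto
      define e where "e = run_end P N j"
      note R = run_end_props[OF less_imp_le[OF u(1)], where P=P, folded e_def]
      have "e = j + k" using a R(1) unfolding e_def by auto
      then have "e < N" "P (Suc e) < P j"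
        using R(4) \<open>k < k'\<close> c2(2) \<open>j' = j\<close> by auto
      moreover have "P j' \<le> P (Suc e)"
        using c2(1)[of "Suc e"] \<open>e = j + k\<close> \<open>k < k'\<close> \<open>j' = j\<close>
        by auto
      ultimately show False using c(5) by auto
    qed
  qed
qed

lemma maximal_run_iff:
  assumes "lattice_path P N" "P 0 = 0" "P N = 0" "dyck_run P N j k"
  shows "maximal_run P N j k \<longleftrightarrow> dyck_start P N j \<and> k = run_end P N j - j"
  using maximal_run_dyck_start maximal_run_length dyck_start_maximal_run assms by blast

lemma dyck_run_cross:
  assumes st: "lattice_path P N" and p: "dyck_run P N j k" and q: "dyck_run (\<lambda>t. - P t) N j' k'"
    and c: "j' \<le> j" "j + k \<le> j' + k'" "P j = - P j'"
  shows False
proof -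
  have p': "0 < k" "j + k \<le> N"
    "\<And>t. j \<le> t \<Longrightarrow> t \<le> j + k \<Longrightarrow> P j \<le> P t" "0 \<le> P j"
    using p unfolding dyck_run_def by auto
  have q': "\<And>t. j' \<le> t \<Longrightarrow> t \<le> j' + k' \<Longrightarrow> P t \<le> P j'"
    using q unfolding dyck_run_def by auto
  have "P j \<le> P j'" using q'[of j] c by auto
  then have z: "P j = 0" using c p'(4) by auto
  have "P (Suc j) \<le> P j'" "P j \<le> P (Suc j)"
    using q'[of "Suc j"] p'(3)[of "Suc j"] c p'(1) by auto
  then have "P (Suc j) = 0" using z c by auto
  moreover have "j < N" using p' by auto
  ultimately show False using lattice_pathD[OF st, of j] z by auto
qed

lemma count_list_1_2:
  "set (v :: nat list) \<subseteq> {1, 2} \<Longrightarrow> count_list v 1 + count_list v 2 = length v"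
  by (induction v) auto

definition path_dyck_factor :: "path \<Rightarrow> nat \<Rightarrow> nat \<Rightarrow> nat \<Rightarrow> int \<Rightarrow> bool" where
  "path_dyck_factor P N j k h \<longleftrightarrow>
     (dyck_run P N j k \<and> h = P j) \<or> (dyck_run (\<lambda>t. - P t) N j k \<and> h = - P j)"

lemma dyck_factor_iff:
  "dyck_factor w j k h \<longleftrightarrow> path_dyck_factor (height w) (length w) j k h"
  unfolding dyck_factor_def path_dyck_factor_def pos_dyck_iff neg_dyck_iff
  by (auto simp: height_def)

lemma path_dyck_factor_neg: "path_dyck_factor (\<lambda>t. - P t) N = path_dyck_factor P N"
  by (auto simp: fun_eq_iff path_dyck_factor_def)

text \<open>A run of P and a run of -P cannot cover each other at the same absolute height, so among
  the factors covering a run of P only runs of P compete.\<close>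
lemma not_covered_iff_maximal_run:
  assumes st: "lattice_path P N" and r: "dyck_run P N j k"
  shows "\<not> (\<exists>j' k'. (j', k') \<noteq> (j, k) \<and> j' \<le> j \<and> j + k \<le> j' + k' \<and>
            path_dyck_factor P N j' k' (P j)) \<longleftrightarrow> maximal_run P N j k"
proof -
  have "path_dyck_factor P N j' k' (P j) \<longleftrightarrow> dyck_run P N j' k' \<and> P j' = P j"
    if "j' \<le> j" "j + k \<le> j' + k'" for j' k'
    using dyck_run_cross[OF st r, of j' k'] that unfolding path_dyck_factor_def by auto
  then show ?thesis unfolding maximal_run_def by blast
qed

lemma max_path_dyck_factor_iff:
  assumes st: "lattice_path P N"
  shows "(\<exists>h. path_dyck_factor P N j k h \<and>
            \<not> (\<exists>j' k'. (j', k') \<noteq> (j, k) \<and> j' \<le> j \<and> j + k \<le> j' + k' \<and> path_dyck_factor P N j' k' h))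
    \<longleftrightarrow> (dyck_run P N j k \<and> maximal_run P N j k) \<or>
        (dyck_run (\<lambda>t. - P t) N j k \<and> maximal_run (\<lambda>t. - P t) N j k)"
proof -
  have st': "lattice_path (\<lambda>t. - P t) N" using lattice_path_scale[OF st, of "-1"] by simp
  note pos = not_covered_iff_maximal_run[OF st]
  note neg = not_covered_iff_maximal_run[OF st', unfolded path_dyck_factor_neg]
  show ?thesis
  proof
    assume "\<exists>h. path_dyck_factor P N j k h \<and>
      \<not> (\<exists>j' k'. (j', k') \<noteq> (j, k) \<and> j' \<le> j \<and> j + k \<le> j' + k' \<and> path_dyck_factor P N j' k' h)"
    then obtain h where h: "path_dyck_factor P N j k h" and not_covered:
      "\<not> (\<exists>j' k'. (j', k') \<noteq> (j, k) \<and> j' \<le> j \<and> j + k \<le> j' + k' \<and> path_dyck_factor P N j' k' h)"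
      by blast
    show "(dyck_run P N j k \<and> maximal_run P N j k) \<or>
        (dyck_run (\<lambda>t. - P t) N j k \<and> maximal_run (\<lambda>t. - P t) N j k)"
    proof (cases "dyck_run P N j k \<and> h = P j")
      case True
      then show ?thesis using pos not_covered by auto
    next
      case False
      then have "dyck_run (\<lambda>t. - P t) N j k" "h = - P j"
        using h unfolding path_dyck_factor_def by auto
      then show ?thesis using neg not_covered by auto
    qed
  next
    assume "(dyck_run P N j k \<and> maximal_run P N j k) \<or>
        (dyck_run (\<lambda>t. - P t) N j k \<and> maximal_run (\<lambda>t. - P t) N j k)"
    then show "\<exists>h. path_dyck_factor P N j k h \<and>
      \<not> (\<exists>j' k'. (j', k') \<noteq> (j, k) \<and> j' \<le> j \<and> j + k \<le> j' + k' \<and> path_dyck_factor P N j' k' h)"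
    proof
      assume r: "dyck_run P N j k \<and> maximal_run P N j k"
      then have "path_dyck_factor P N j k (P j)" unfolding path_dyck_factor_def by simp
      then show ?thesis using pos r by blast
    next
      assume r: "dyck_run (\<lambda>t. - P t) N j k \<and> maximal_run (\<lambda>t. - P t) N j k"
      then have "path_dyck_factor P N j k (- P j)" unfolding path_dyck_factor_def by simp
      then show ?thesis using neg r by blast
    qed
  qed
qed

lemma maximal_runs_eq:
  assumes st: "lattice_path P N" and P0: "P 0 = 0" and PN: "P N = 0"
  shows "{(j, k). dyck_run P N j k \<and> maximal_run P N j k}
    = (\<lambda>j. (j, run_end P N j - j)) ` {j. dyck_start P N j}"
  using maximal_run_iff[OF st P0 PN] dyck_start_dyck_run[OF st PN] by auto

lemma count_list_balanced_factor:
  assumes s: "set w \<subseteq> {1, 2}" and jk: "j + k \<le> length w" "height w (j + k) = height w j"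
  shows "count_list (take k (drop j w)) 1 = k div 2"
proof -
  have "set (take k (drop j w)) \<subseteq> {1, 2}"
    using s by (meson order_trans set_drop_subset set_take_subset)
  then have "count_list (take k (drop j w)) 1 + count_list (take k (drop j w)) 2 = k"
    using count_list_1_2 jk by auto
  moreover have "count_list (take k (drop j w)) 1 = count_list (take k (drop j w)) 2"
    using letter_excess_diff[of k k j w 1 2] jk unfolding height_eq_letter_excess by auto
  ultimately show ?thesis by auto
qed

lemma phi_eq_phi_path:
  assumes s: "set w \<subseteq> {1, 2}" and z: "count_list w 1 = count_list w 2"
  shows "phi a w = phi_path a (height w) (length w)"
proof -
  define N where "N = length w"
  define H where "H = height w"
  define H' where "H' = (\<lambda>t. - H t)"
  define runs where "runs = (\<lambda>P. (\<lambda>j. (j, run_end P N j - j)) ` {j. dyck_start P N j})"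
  have st: "lattice_path H N" "lattice_path H' N"
    using lattice_path_height[OF s] lattice_path_scale[of H N "-1"]
    unfolding H_def H'_def N_def by auto
  have ends: "H 0 = 0" "H N = 0" "H' 0 = 0" "H' N = 0"
    using height_length[OF z] unfolding H_def H'_def N_def by auto
  have "max_dyck_factors w = {(j, k). dyck_run H N j k \<and> maximal_run H N j k}
      \<union> {(j, k). dyck_run H' N j k \<and> maximal_run H' N j k}"
    unfolding max_dyck_factors_def dyck_factor_iff max_path_dyck_factor_iff[OF lattice_path_height[OF s]]
      H'_def H_def N_def by auto
  also have "\<dots> = runs H \<union> runs H'"
    unfolding runs_def maximal_runs_eq[OF st(1) ends(1,2)] maximal_runs_eq[OF st(2) ends(3,4)] ..
  finally have mdf: "max_dyck_factors w = runs H \<union> runs H'" .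
  have weight: "(1 + real (count_list (take k (drop j w)) 1)) powr a = dyck_weight a (k div 2)"
    if "(j, k) \<in> runs P" "P = H \<or> P = H'" for P j k
  proof -
    have "dyck_run P N j k"
      using that dyck_start_dyck_run[OF st(1) ends(2)] dyck_start_dyck_run[OF st(2) ends(4)]
      unfolding runs_def by auto
    then have "j + k \<le> length w" "height w (j + k) = height w j"
      using that(2) unfolding dyck_run_def H'_def H_def N_def by auto
    then show ?thesis using count_list_balanced_factor[OF s] unfolding dyck_weight_def by simp
  qed
  have finite_runs: "finite (runs P)" for P unfolding runs_def by (simp add: finite_dyck_start)
  have disj: "runs H \<inter> runs H' = {}" unfolding runs_def dyck_start_def H'_def by auto
  have sum_runs: "(\<Sum>(j, k)\<in>runs P. dyck_weight a (k div 2)) = dyck_sum a P N" for P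
    unfolding runs_def dyck_sum_def by (subst sum.reindex) (auto simp: inj_on_def)
  have "phi a w = (\<Sum>(j, k)\<in>runs H \<union> runs H'. dyck_weight a (k div 2))"
    unfolding phi_def mdf using weight by (intro sum.cong) auto
  also have "\<dots> = dyck_sum a H N + dyck_sum a H' N"
    unfolding sum.union_disjoint[OF finite_runs finite_runs disj] sum_runs ..
  finally show ?thesis unfolding phi_path_def H'_def H_def N_def .
qed

lemma length_flip[simp]: "length (flip i w) = length w"
  unfolding flip_def by simp

lemma nth_flip: "Suc i < length w \<Longrightarrow> k < length w \<Longrightarrow>
   flip i w ! k = (if k = Suc i then w ! i else if k = i then w ! Suc i else w ! k)"
  unfolding flip_def by (auto simp: nth_list_update)

lemma set_flip_subset: "Suc i < length w \<Longrightarrow> set (flip i w) \<subseteq> set w"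
proof -
  assume i: "Suc i < length w"
  have m: "w ! Suc i \<in> set w" "w ! i \<in> set w" using i by (auto intro!: nth_mem)
  have "set (w[i := w ! Suc i]) \<subseteq> set w"
    using set_update_subset_insert[of w i "w ! Suc i"] m by auto
  moreover have "set (w[i := w ! Suc i, Suc i := w ! i]) \<subseteq> insert (w ! i) (set (w[i := w ! Suc i]))"
    by (rule set_update_subset_insert)
  ultimately show ?thesis unfolding flip_def using m by auto
qed

lemma height_flip:
  assumes s: "set w \<subseteq> {1, 2}" and i: "Suc i < length w" and ne: "w ! i \<noteq> w ! Suc i"
  shows "height (flip i w) = (height w)(Suc i := 2 * height w i - height w (Suc i))"
proof
  fix t
  have "w ! i \<in> set w" "w ! Suc i \<in> set w" using i by (auto intro!: nth_mem)
  then have wi: "w ! i \<in> {1, 2}" "w ! Suc i \<in> {1, 2}" using s by auto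
  have opp: "letter_step (w ! Suc i) = - letter_step (w ! i)" using wi ne by (auto simp: letter_step_def)
  have HS: "height w (Suc i) = height w i + letter_step (w ! i)" using height_Suc[of w i] i by simp
  show "height (flip i w) t = ((height w)(Suc i := 2 * height w i - height w (Suc i))) t"
  proof (induction t)
    case 0 then show ?case by simp
  next
    case (Suc t)
    have HF: "height (flip i w) (Suc t) = height (flip i w) t + (if t < length w then letter_step (flip i w ! t) else 0)"
      using height_Suc[of "flip i w" t] by simp
    have HW: "height w (Suc t) = height w t + (if t < length w then letter_step (w ! t) else 0)"
      using height_Suc[of w t] by simp
    consider "t < i" | "t = i" | "t = Suc i" | "Suc i < t" by linarith
    then show ?case
    proof cases
      case 1
      then show ?thesis using Suc HF HW nth_flip[OF i, of t] i by auto
    next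
      case 2
      then show ?thesis using Suc HF nth_flip[OF i, of t] i HS opp by auto
    next
      case 3
      then have "height (flip i w) t = height w i + letter_step (w ! Suc i)" using Suc HS opp by auto
      then show ?thesis using 3 HF HW nth_flip[OF i, of t] i HS opp by auto
    next
      case 4
      then show ?thesis using Suc HF HW nth_flip[OF i, of t] i by auto
    qed
  qed
qed

lemma flip_balanced:
  assumes s: "set w \<subseteq> {1, 2}" and z: "count_list w 1 = count_list w 2"
    and i: "Suc i < length w" and ne: "w ! i \<noteq> w ! Suc i"
  shows "count_list (flip i w) 1 = count_list (flip i w) 2"
proof -
  have "height (flip i w) (length w) = height w (length w)" using height_flip[OF s i ne] i by simp
  then have "height (flip i w) (length (flip i w)) = 0" using height_length[OF z] by simp
  then show ?thesis unfolding height_def by simp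
qed


lemma two_letters:
  "x \<in> {1::nat, 2} \<Longrightarrow> y \<in> {1, 2} \<Longrightarrow> z \<in> {1, 2} \<Longrightarrow> y \<noteq> z \<Longrightarrow> (x = z \<longleftrightarrow> x \<noteq> y)"
  by auto

lemma flip_allowed_iff:
  assumes s: "set w \<subseteq> {1, 2}" and i: "Suc i < length w" and ne: "w ! i \<noteq> w ! Suc i"
  shows "mismatches (flip i w) \<le> mismatches w \<longleftrightarrow>
    (1 \<le> i \<and> w ! (i - 1) = w ! i) \<or> (i + 2 < length w \<and> w ! Suc i = w ! (i + 2)) \<or> (i = 0 \<and> i + 2 = length w)"
proof -
  define N where "N = length w"
  define f where "f = flip i w"
  define M where "M = {k. Suc k < N \<and> w ! k = w ! Suc k}"
  define M' where "M' = {k. Suc k < N \<and> f ! k = f ! Suc k}"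
  define X where "X = (if 1 \<le> i then {i - 1} else {}) \<union> (if i + 2 < N then {Suc i} else {})"
  have lt: "k < N \<Longrightarrow> w ! k \<in> {1, 2}" for k
    using s unfolding N_def by (auto dest: nth_mem)
  have fn: "k < N \<Longrightarrow> f ! k = (if k = Suc i then w ! i else if k = i then w ! Suc i else w ! k)" for k
    using nth_flip[OF i] unfolding f_def N_def by auto
  have iN: "Suc i < N" using i unfolding N_def .
  have M'eq: "M' = (M - X) \<union> (X - M)"
  proof (intro set_eqI)
    fix k
    consider "k = i" | "Suc k = i" | "k = Suc i" | "k \<noteq> i \<and> Suc k \<noteq> i \<and> k \<noteq> Suc i" by blast
    then show "k \<in> M' \<longleftrightarrow> k \<in> (M - X) \<union> (X - M)"
    proof cases
      case 1 then show ?thesis using fn[of i] fn[of "Suc i"] iN ne unfolding M'_def M_def X_def by auto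
    next
      case 2
      then have "k < N" "w ! k \<in> {1, 2}" using iN lt by auto
      moreover have "w ! i \<in> {1, 2}" "w ! Suc i \<in> {1, 2}" using lt iN by auto
      ultimately have "w ! k = w ! Suc i \<longleftrightarrow> w ! k \<noteq> w ! i"
        using two_letters ne by blast
      then show ?thesis using 2 fn[of k] fn[of "Suc k"] iN unfolding M'_def M_def X_def by auto
    next
      case 3
      show ?thesis
      proof (cases "i + 2 < N")
        case True
        have "w ! (i + 2) \<in> {1, 2}" "w ! i \<in> {1, 2}" "w ! Suc i \<in> {1, 2}"
          using lt True iN by auto
        then have "w ! i = w ! (i + 2) \<longleftrightarrow> w ! Suc i \<noteq> w ! (i + 2)"
          using ne by auto
        then show ?thesis
          using 3 True fn[of "Suc i"] fn[of "Suc (Suc i)"] unfolding M'_def M_def X_def by auto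
      next
        case False then show ?thesis using 3 unfolding M'_def M_def X_def by auto
      qed
    next
      case 4
      then show ?thesis using fn[of k] fn[of "Suc k"] unfolding M'_def M_def X_def by auto
    qed
  qed
  have fin: "finite M" "finite X" unfolding M_def X_def by (auto intro: finite_subset[of _ "{..<N}"])
  have c1: "card M' = card (M - X) + card (X - M)"
    unfolding M'eq by (rule card_Un_disjoint) (use fin in auto)
  have c2: "card M = card (M - X) + card (M \<inter> X)"
  proof -
    have "M = (M - X) \<union> (M \<inter> X)" by auto
    then show ?thesis using card_Un_disjoint[of "M - X" "M \<inter> X"] fin by auto
  qed
  have mm: "mismatches (flip i w) = card M'" "mismatches w = card M"
    unfolding mismatches_def M'_def M_def f_def N_def by simp_all
  have L: "(1 \<le> i \<and> i - 1 \<in> M) \<longleftrightarrow> (1 \<le> i \<and> w ! (i - 1) = w ! i)" unfolding M_def using iN by auto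
  have R: "(i + 2 < N \<and> Suc i \<in> M) \<longleftrightarrow> (i + 2 < N \<and> w ! Suc i = w ! (i + 2))" unfolding M_def by auto
  have ne2: "i - 1 \<noteq> Suc i" by auto
  have "card (X - M) \<le> card (M \<inter> X) \<longleftrightarrow> (1 \<le> i \<and> i - 1 \<in> M) \<or> (i + 2 < N \<and> Suc i \<in> M) \<or> (i = 0 \<and> i + 2 = N)"
    unfolding X_def using ne2 iN
      by (cases "1 \<le> i"; cases "i + 2 < N"; cases "i - 1 \<in> M"; cases "Suc i \<in> M")
      (auto simp: card_insert_if Int_insert_right insert_Diff_if)
  then show ?thesis using c1 c2 mm L R unfolding N_def by auto
qed

lemma exists_letter_change:
  fixes w :: "nat list"
  assumes s: "set w \<subseteq> {1, 2}" and z: "count_list w 1 = count_list w 2" and ne: "w \<noteq> []"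
  shows "\<exists>i. Suc i < length w \<and> w ! i \<noteq> w ! Suc i"
proof (rule ccontr)
  assume "\<not> ?thesis"
  then have "t < length w \<Longrightarrow> w ! t = w ! 0" for t by (induction t) auto
  then have const: "\<forall>x\<in>set w. x = w ! 0" by (auto simp: in_set_conv_nth)
  have "w ! 0 \<in> {1, 2}" using s ne by (auto intro!: nth_mem)
  then have "3 - w ! 0 \<notin> set w" using const by auto
  then have "count_list w (3 - w ! 0) = 0" by (rule count_notin)
  moreover have "count_list w (w ! 0) = length w"
    using const by (simp add: count_list_eq_length_filter filter_id_conv)
  ultimately show False using z ne \<open>w ! 0 \<in> {1, 2}\<close> by auto
qed

text \<open>The letter change nearest to a mismatch is adjacent to an equal pair of letters.\<close>
lemma exists_allowed_flip:
  assumes s: "set w \<subseteq> {1, 2}" and z: "count_list w 1 = count_list w 2" and m: "0 < mismatches w"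
  shows "\<exists>i. Suc i < length w \<and> w ! i \<noteq> w ! Suc i \<and>
    ((1 \<le> i \<and> w ! (i - 1) = w ! i) \<or> (i + 2 < length w \<and> w ! Suc i = w ! (i + 2)))"
proof -
  define N where "N = length w"
  obtain k where k: "Suc k < N" "w ! k = w ! Suc k"
    using m unfolding mismatches_def N_def
      by (metis (mono_tags, lifting) card.empty empty_Collect_eq less_irrefl)
  obtain c where c: "Suc c < N" "w ! c \<noteq> w ! Suc c"
    using exists_letter_change[OF s z] k unfolding N_def by fastforce
  define T where "T = {t. k < t \<and> Suc t < N \<and> w ! t \<noteq> w ! Suc t}"
  define S where "S = {t. Suc t \<le> k \<and> w ! t \<noteq> w ! Suc t}"
  have "c \<noteq> k" using c k by auto
  then have "T \<noteq> {} \<or> S \<noteq> {}" using c unfolding T_def S_def by (cases "k < c") auto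
  then show ?thesis
  proof
    assume ne: "T \<noteq> {}"
    define t where "t = Min T"
    have finT: "finite T" unfolding T_def by (auto intro: finite_subset[of _ "{..<N}"])
    have tT: "t \<in> T" using Min_in[OF finT ne] unfolding t_def .
    have tmin: "\<And>s. s \<in> T \<Longrightarrow> t \<le> s"
      using Min_le[OF finT] unfolding t_def by auto
    have "w ! (t - 1) = w ! t"
    proof (cases "t - 1 = k")
      case True then show ?thesis using k tT unfolding T_def by auto
    next
      case False
      then have "t - 1 \<notin> T" using tmin[of "t - 1"] tT unfolding T_def by force
      then show ?thesis using False tT unfolding T_def by auto
    qed
    then show ?thesis using tT unfolding T_def N_def by (intro exI[of _ t]) auto
  next
    assume ne: "S \<noteq> {}"
    define t where "t = Max S"
    have finS: "finite S" unfolding S_def by (auto intro: finite_subset[of _ "{..k}"])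
    have tS: "t \<in> S" using Max_in[OF finS ne] unfolding t_def .
    have tmax: "\<And>s. s \<in> S \<Longrightarrow> s \<le> t"
      using Max_ge[OF finS] unfolding t_def by auto
    have "w ! Suc t = w ! (t + 2)"
    proof (cases "Suc t = k")
      case True then show ?thesis using k by auto
    next
      case False
      then have "Suc t \<notin> S" using tmax[of "Suc t"] by auto
      then show ?thesis using False tS unfolding S_def by auto
    qed
    moreover have "t + 2 < N" "Suc t < N" using tS k unfolding S_def by auto
    ultimately show ?thesis using tS unfolding S_def N_def by (intro exI[of _ t]) auto
  qed
qed

lemma letter_step_eq_iff:
  "x \<in> {1, 2} \<Longrightarrow> y \<in> {1, 2} \<Longrightarrow> letter_step x = letter_step y \<longleftrightarrow> x = y"
  by (auto simp: letter_step_def)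

lemma letter_step_opposite_iff:
  "x \<in> {1, 2} \<Longrightarrow> y \<in> {1, 2} \<Longrightarrow> letter_step x + letter_step y = 0 \<longleftrightarrow> x \<noteq> y"
  by (auto simp: letter_step_def)


section \<open>One step of the cooling process\<close>

locale cooling_config =
  fixes w :: "nat list" and n :: nat and a :: real
  assumes config: "w \<in> configs (2 * n)" and a: "0 < a" "a < 1"
begin

lemma length_w: "length w = 2 * n"
  and set_w: "set w \<subseteq> {1, 2}"
  and balanced_w: "count_list w 1 = count_list w 2"
  using config unfolding configs_def by auto

sublocale balanced_path "height w" "2 * n" n a
  unfolding balanced_path_def
  using lattice_path_height[OF set_w] height_length[OF balanced_w] a length_w by auto

lemma letter: "t < 2 * n \<Longrightarrow> w ! t \<in> {1, 2}"
  by (rule subsetD[OF set_w nth_mem]) (simp add: length_w)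

lemma height_step: "t < 2 * n \<Longrightarrow> height w (Suc t) - height w t = letter_step (w ! t)"
  using height_Suc[of w t] length_w by simp

lemma extremum_Suc_iff:
  "extremum (Suc i) \<longleftrightarrow> Suc i < 2 * n \<and> w ! i \<noteq> w ! Suc i"
proof (cases "Suc i < 2 * n")
  case True
  have "height w (Suc (Suc i)) - height w i = letter_step (w ! i) + letter_step (w ! Suc i)"
    using height_step[of i] height_step[of "Suc i"] True by auto
  then show ?thesis
    using letter_step_opposite_iff[OF letter letter, of i "Suc i"] True unfolding extremum_def by auto
qed (auto simp: extremum_def)

lemma left_mismatch_Suc_iff:
  "Suc i < 2 * n \<Longrightarrow> left_mismatch (Suc i) \<longleftrightarrow> 1 \<le> i \<and> w ! (i - 1) = w ! i"
  using height_step[of "i - 1"] height_step[of i] letter_step_eq_iff[OF letter letter, of "i - 1" i]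
  unfolding left_mismatch_def by (cases "1 \<le> i") auto

lemma right_mismatch_Suc_iff:
  "Suc i < 2 * n \<Longrightarrow> right_mismatch (Suc i) \<longleftrightarrow> i + 2 < 2 * n \<and> w ! Suc i = w ! (i + 2)"
  using height_step[of "i + 2"] height_step[of "Suc i"]
    letter_step_eq_iff[OF letter letter, of "i + 2" "Suc i"]
  unfolding right_mismatch_def by (cases "i + 2 < 2 * n") (auto simp: numeral_2_eq_2)

lemma Suc_in_allowed_iff:
  "Suc i \<in> allowed \<longleftrightarrow> Suc i < 2 * n \<and> w ! i \<noteq> w ! Suc i \<and>
     ((1 \<le> i \<and> w ! (i - 1) = w ! i) \<or> (i + 2 < 2 * n \<and> w ! Suc i = w ! (i + 2)))"
proof (cases "Suc i < 2 * n")
  case True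
  then show ?thesis
    unfolding allowed_def mem_Collect_eq extremum_Suc_iff left_mismatch_Suc_iff[OF True]
      right_mismatch_Suc_iff[OF True] by blast
qed (simp add: allowed_def extremum_Suc_iff)

lemma allowed_nonempty: "0 < mismatches w \<Longrightarrow> allowed \<noteq> {}"
proof -
  assume "0 < mismatches w"
  then obtain i where "Suc i < length w" "w ! i \<noteq> w ! Suc i"
    "(1 \<le> i \<and> w ! (i - 1) = w ! i) \<or> (i + 2 < length w \<and> w ! Suc i = w ! (i + 2))"
    using exists_allowed_flip[OF set_w balanced_w] by blast
  then have "Suc i \<in> allowed" unfolding Suc_in_allowed_iff length_w by blast
  then show ?thesis by blast
qed

text \<open>For n = 1 the flip of 12 or 21 is allowed although it touches no mismatch; this is the
  only difference between the two notions.\<close>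
lemma allowed_eq_allowed_flips:
  assumes "2 \<le> n"
  shows "allowed = Suc ` allowed_flips w"
proof -
  have iff: "i \<in> allowed_flips w \<longleftrightarrow> Suc i \<in> allowed" for i
  proof (cases "Suc i < 2 * n \<and> w ! i \<noteq> w ! Suc i")
    case True
    then show ?thesis unfolding allowed_flips_def Suc_in_allowed_iff
      using flip_allowed_iff[OF set_w, of i] length_w assms by auto
  next
    case False
    then show ?thesis unfolding allowed_flips_def Suc_in_allowed_iff using length_w by auto
  qed
  show ?thesis
  proof (intro set_eqI iffI)
    fix v assume v: "v \<in> allowed"
    then have "v = Suc (v - 1)" unfolding allowed_def extremum_def by auto
    then show "v \<in> Suc ` allowed_flips w" using v iff[of "v - 1"] by (metis image_eqI)
  qed (use iff in auto)
qed

lemma phi_flip: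
  assumes i: "Suc i \<in> allowed"
  shows "phi a (flip i w) - phi a w = flip_gain (Suc i)"
proof -
  have e: "extremum (Suc i)" using i unfolding allowed_def by auto
  then have i': "Suc i < length w" "w ! i \<noteq> w ! Suc i"
    using extremum_Suc_iff length_w by auto
  have "phi a (flip i w) = phi_path a (height (flip i w)) (2 * n)"
    using phi_eq_phi_path[OF order_trans[OF set_flip_subset[OF i'(1)] set_w]
        flip_balanced[OF set_w balanced_w i']] length_w by simp
  moreover have "phi a w = phi_path a (height w) (2 * n)"
    using phi_eq_phi_path[OF set_w balanced_w] length_w by simp
  ultimately show ?thesis
    using phi_path_flip[OF e] height_flip[OF set_w i'] by simp
qed

end

theorem lemma1:
  fixes \<alpha> :: real and n :: nat and w :: "nat list"
  assumes "0 < \<alpha>" and "\<alpha> < 1" and "1 \<le> n"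
    and "w \<in> configs (2 * n)" and "mismatches w > 0"
  shows "measure_pmf.expectation (cool_step w) (\<lambda>w'. phi \<alpha> w' - phi \<alpha> w)
           \<le> - (\<alpha> * (1 - \<alpha>) / 2) * real n powr (\<alpha> - 2)"
proof -
  interpret cooling_config w n \<alpha>
    using assms by unfold_locales auto
  have ne: "allowed \<noteq> {}" using allowed_nonempty assms(5) .
  then have n2: "2 \<le> n" using allowed_imp_n_ge_2 by blast
  note A = allowed_eq_allowed_flips[OF n2]
  have fin: "finite (allowed_flips w)" and ne': "allowed_flips w \<noteq> {}"
    using finite_allowed ne unfolding A by (auto simp: finite_image_iff)
  have "measure_pmf.expectation (cool_step w) (\<lambda>w'. phi \<alpha> w' - phi \<alpha> w)
      = (\<Sum>i\<in>allowed_flips w. phi \<alpha> (flip i w) - phi \<alpha> w) / card (allowed_flips w)"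
    using assms(5) unfolding cool_step_def by (simp add: integral_pmf_of_set[OF ne' fin])
  also have "\<dots> = (\<Sum>i\<in>allowed_flips w. flip_gain (Suc i)) / card (allowed_flips w)"
    using phi_flip A by (intro arg_cong2[where f = "(/)"] sum.cong) auto
  also have "\<dots> = (\<Sum>v\<in>allowed. flip_gain v) / card allowed"
    unfolding A by (simp add: sum.reindex card_image)
  also have "\<dots> \<le> - drift \<alpha> n" using average_flip_gain_le[OF ne] .
  finally show ?thesis unfolding drift_def by simp
qed

end
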